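(* Let $X\subset\mathbb{P}^{n+1}$ be a smooth cubic hypersurface over $\mathbb{Q}$ with $n\ge3$. Let $P\in X(\mathbb{Q})$ be a non-Eckardt point and let $Q\in X_P(\mathbb{Q})$ with $T_Q X\ne T_P X$. Then $Q\in\operatorname{Span}(P)$.
   Context: $T_P X$ is the tangent hyperplane to $X$ at $P$ and $X_P:=X\cap T_P X$. A point $P\in X$ is an Eckardt point if $X_P$ is a cone with vertex $P$. For $S\subseteq X(\mathbb{Q})$, define $S=S_0\subseteq S_1\subseteq\cdots$ by letting $S_{k+1}$ be the set of $R\in X(\mathbb{Q})$ with either $R\in S_k$ or $\ell\cdot X=P+Q+R$ for some $\mathbb{Q}$-line $\ell\not\subset X$ and some $P,Q\in S_k$ (possibly equal); $\operatorname{Span}(S)=\bigcup_kS_k$ and $\operatorname{Span}(P)=\operatorname{Span}(\{P\})$. *)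

theory Defs
  imports Complex_Main "HOL-Library.Cardinality"
begin

text \<open>A cubic form in the homogeneous coordinates of P^{n+1} is given by rational
coefficients c i j k, indexed by a finite type 'n with CARD('n) = n + 2.
Points of P^{n+1} are represented by nonzero coordinate vectors; everything below
is invariant under nonzero rescaling of representatives.\<close>

type_synonym 'n cubic = "'n \<Rightarrow> 'n \<Rightarrow> 'n \<Rightarrow> rat"

definition cform :: "('n::finite) cubic \<Rightarrow> ('n \<Rightarrow> 'a::field_char_0) \<Rightarrow> 'a" where
  "cform c x = (\<Sum>i\<in>UNIV. \<Sum>j\<in>UNIV. \<Sum>k\<in>UNIV. of_rat (c i j k) * x i * x j * x k)"

definition cpartial :: "('n::finite) cubic \<Rightarrow> 'n \<Rightarrow> ('n \<Rightarrow> 'a::field_char_0) \<Rightarrow> 'a" where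
  "cpartial c m x = (\<Sum>i\<in>UNIV. \<Sum>j\<in>UNIV. \<Sum>k\<in>UNIV. of_rat (c i j k) *
      ((if i = m then x j * x k else 0) + (if j = m then x i * x k else 0)
       + (if k = m then x i * x j else 0)))"

text \<open>Smoothness: the partial derivatives have no common zero in P^{n+1} over
an algebraically closed field of characteristic 0 (we use the complex numbers).\<close>
definition smooth_cubic :: "('n::finite) cubic \<Rightarrow> bool" where
  "smooth_cubic c \<longleftrightarrow> (\<forall>z :: 'n \<Rightarrow> complex. (\<forall>m. cpartial c m z = 0) \<longrightarrow> z = (\<lambda>_. 0))"

definition to_cplx :: "('n \<Rightarrow> rat) \<Rightarrow> ('n \<Rightarrow> complex)" where
  "to_cplx x = (\<lambda>i. of_rat (x i))"

definition on_X :: "('n::finite) cubic \<Rightarrow> ('n \<Rightarrow> rat) \<Rightarrow> bool" where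
  "on_X c x \<longleftrightarrow> x \<noteq> (\<lambda>_. 0) \<and> cform c x = 0"

definition in_tangent :: "('n::finite) cubic \<Rightarrow> ('n \<Rightarrow> 'a::field_char_0) \<Rightarrow> ('n \<Rightarrow> 'a) \<Rightarrow> bool" where
  "in_tangent c P x \<longleftrightarrow> (\<Sum>m\<in>UNIV. cpartial c m P * x m) = 0"

definition tangent_hyperplane :: "('n::finite) cubic \<Rightarrow> ('n \<Rightarrow> rat) \<Rightarrow> ('n \<Rightarrow> rat) set" where
  "tangent_hyperplane c P = {x. in_tangent c P x}"

text \<open>P is an Eckardt point: X_P = X \<inter> T_P X is a cone with vertex P, i.e. for every
(geometric, complex) point R of X_P the whole line through P and R lies in X_P.\<close>
definition eckardt :: "('n::finite) cubic \<Rightarrow> ('n \<Rightarrow> rat) \<Rightarrow> bool" where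
  "eckardt c P \<longleftrightarrow>
     (\<forall>R :: 'n \<Rightarrow> complex. cform c R = 0 \<and> in_tangent c (to_cplx P) R \<longrightarrow>
        (\<forall>s t :: complex. cform c (\<lambda>i. s * to_cplx P i + t * R i) = 0 \<and>
                          in_tangent c (to_cplx P) (\<lambda>i. s * to_cplx P i + t * R i)))"

text \<open>line_meets c P Q R: there is a Q-line l (spanned by independent rational
vectors A, B) not contained in X with l \<cdot> X = P + Q + R as divisors: the restriction
of the cubic form to l is a nonzero multiple of the product of the linear forms
vanishing at the parameters of P, Q, R.\<close>
definition line_meets :: "('n::finite) cubic \<Rightarrow> ('n \<Rightarrow> rat) \<Rightarrow> ('n \<Rightarrow> rat) \<Rightarrow> ('n \<Rightarrow> rat) \<Rightarrow> bool" where
  "line_meets c P Q R \<longleftrightarrow>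
    (\<exists>A B :: 'n \<Rightarrow> rat.
       (\<forall>s t. (\<forall>i. s * A i + t * B i = 0) \<longrightarrow> s = 0 \<and> t = 0) \<and>
       (\<exists>p1 p2 q1 q2 r1 r2 a b e k :: rat.
          (p1, p2) \<noteq> (0, 0) \<and> (q1, q2) \<noteq> (0, 0) \<and> (r1, r2) \<noteq> (0, 0) \<and>
          a \<noteq> 0 \<and> b \<noteq> 0 \<and> e \<noteq> 0 \<and> k \<noteq> 0 \<and>
          P = (\<lambda>i. a * (p1 * A i + p2 * B i)) \<and>
          Q = (\<lambda>i. b * (q1 * A i + q2 * B i)) \<and>
          R = (\<lambda>i. e * (r1 * A i + r2 * B i)) \<and>
          (\<forall>s t. cform c (\<lambda>i. s * A i + t * B i)
                   = k * (p2 * s - p1 * t) * (q2 * s - q1 * t) * (r2 * s - r1 * t))))"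

text \<open>Span(P0) = union of the S_k, as an inductive closure; points are
represented by all their nonzero rational representatives.\<close>
inductive_set qspan :: "('n::finite) cubic \<Rightarrow> ('n \<Rightarrow> rat) \<Rightarrow> ('n \<Rightarrow> rat) set"
  for c :: "'n cubic" and P0 :: "'n \<Rightarrow> rat" where
  base: "a \<noteq> 0 \<Longrightarrow> (\<lambda>i. a * P0 i) \<in> qspan c P0"
| step: "P \<in> qspan c P0 \<Longrightarrow> Q \<in> qspan c P0 \<Longrightarrow> line_meets c P Q R \<Longrightarrow> R \<in> qspan c P0"

end

theory Submission
  imports Defs "HOL-Computational_Algebra.Fundamental_Theorem_Algebra"
begin

text \<open>Write \<open>polar c\<close> for the symmetric trilinear form of the cubic, so that \<open>X = {polar c x x x = 0}\<close>
  and \<open>T\<^sub>P X = {x. polar c P P x = 0}\<close>.  If \<open>polar c P Q Q \<noteq> 0\<close>, the line \<open>PQ\<close> is tangent at \<open>P\<close>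
  and meets \<open>X\<close> in \<open>2P + Q\<close>.  Otherwise the line \<open>PQ\<close> lies on \<open>X\<close>; take a rational \<open>R \<in> T\<^sub>P X\<close> in
  general position.  The third point \<open>A\<close> of \<open>X\<close> on the tangent line \<open>PR\<close> is in \<open>Span(P)\<close>, the third
  point \<open>B\<close> on the line \<open>QA\<close> is again the third point of a tangent line through \<open>P\<close>, and \<open>Q\<close> is the
  third point on the line \<open>AB\<close>.  General position means that three polynomials on \<open>T\<^sub>P X\<close> do not
  vanish: \<open>polar c P R R\<close> (as \<open>P\<close> is not an Eckardt point), \<open>polar c Q Q R\<close> (as \<open>T\<^sub>Q X \<noteq> T\<^sub>P X\<close>) and
  \<open>tangency_defect c P Q R\<close> (as a smooth cubic of dimension \<open>n \<ge> 3\<close> contains no linear space of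
  codimension 2 in \<open>P\<^sup>n\<^sup>+\<^sup>1\<close>); nonzero polynomials have a common non-root on a rational vector
  space.  Conditions over \<open>\<complex>\<close> are reached from rational points by Zariski density.\<close>

section \<open>Polarisation of the cubic form\<close>

definition polar :: "('n::finite) cubic \<Rightarrow> ('n \<Rightarrow> 'a::field_char_0) \<Rightarrow> ('n \<Rightarrow> 'a) \<Rightarrow> ('n \<Rightarrow> 'a) \<Rightarrow> 'a" where
  "polar c x y z = (\<Sum>i\<in>UNIV. \<Sum>j\<in>UNIV. \<Sum>k\<in>UNIV. of_rat (c i j k) *
    (x i*y j*z k + x i*z j*y k + y i*x j*z k + y i*z j*x k + z i*x j*y k + z i*y j*x k)) / 6"

definition lincomb :: "'a::comm_ring_1 \<Rightarrow> ('n \<Rightarrow> 'a) \<Rightarrow> 'a \<Rightarrow> ('n \<Rightarrow> 'a) \<Rightarrow> ('n \<Rightarrow> 'a)" where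
  "lincomb s x t y = (\<lambda>i. s * x i + t * y i)"

definition unit_vec :: "'n \<Rightarrow> 'n \<Rightarrow> 'a::comm_ring_1" where
  "unit_vec m = (\<lambda>i. if i = m then 1 else 0)"

definition dot :: "('n::finite \<Rightarrow> 'a::comm_ring_1) \<Rightarrow> ('n \<Rightarrow> 'a) \<Rightarrow> 'a" where
  "dot l x = (\<Sum>i\<in>UNIV. l i * x i)"

lemma lambda_eq_lincomb: "(\<lambda>i. s * A i + t * B i) = lincomb s A t B"
  unfolding lincomb_def ..

lemma polar_sym12: "polar c x y z = polar c y x z"
  unfolding polar_def by (simp add: ac_simps)

lemma polar_sym23: "polar c x y z = polar c x z y"
  unfolding polar_def by (simp add: ac_simps)

lemmas polar_sym = polar_sym12 polar_sym23

lemma polar_lincomb1: "polar c (lincomb s a t b) y z = s * polar c a y z + t * polar c b y z"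
  unfolding polar_def lincomb_def
  by (simp add: algebra_simps sum.distrib sum_distrib_left add_divide_distrib)

lemma polar_lincomb2: "polar c y (lincomb s a t b) z = s * polar c y a z + t * polar c y b z"
  using polar_lincomb1[of c s a t b y z] polar_sym12[of c y] polar_sym12[of c _ y z] by metis

lemma polar_lincomb3: "polar c y z (lincomb s a t b) = s * polar c y z a + t * polar c y z b"
  using polar_lincomb2[of c y s a t b z] polar_sym23[of c y] polar_sym23[of c y _ z] by metis

lemmas polar_lincomb = polar_lincomb1 polar_lincomb2 polar_lincomb3

lemma polar_zero1[simp]: "polar c (\<lambda>_. 0) x y = 0"
  unfolding polar_def by simp

lemma polar_zero2[simp]: "polar c x (\<lambda>_. 0) y = 0"
  unfolding polar_def by simp

lemma polar_zero3[simp]: "polar c x y (\<lambda>_. 0) = 0"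
  unfolding polar_def by simp

lemma cform_eq_polar: "cform c x = polar c x x x"
proof -
  have "\<And>i j k. of_rat (c i j k) * (x i*x j*x k + x i*x j*x k + x i*x j*x k + x i*x j*x k + x i*x j*x k + x i*x j*x k)
     = 6 * (of_rat (c i j k) * x i * x j * x k)" by (simp add: algebra_simps)
  then show ?thesis unfolding polar_def cform_def
    by (simp only: sum_distrib_left[symmetric]) simp
qed

lemma cform_lincomb:
  "cform c (lincomb s x t y) = s^3 * polar c x x x + 3 * s^2 * t * polar c x x y + 3 * s * t^2 * polar c x y y + t^3 * polar c y y y"
  unfolding cform_eq_polar polar_lincomb
  by (simp only: polar_sym) (simp add: algebra_simps power2_eq_square power3_eq_cube)

lemma sum_swap_innermost:
  "(\<Sum>m\<in>M. \<Sum>i\<in>I. \<Sum>j\<in>J. \<Sum>k\<in>K. f i j k m) = (\<Sum>i\<in>I. \<Sum>j\<in>J. \<Sum>k\<in>K. \<Sum>m\<in>M. f i j k m)"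
proof -
  have "(\<Sum>m\<in>M. \<Sum>i\<in>I. \<Sum>j\<in>J. \<Sum>k\<in>K. f i j k m) = (\<Sum>i\<in>I. \<Sum>m\<in>M. \<Sum>j\<in>J. \<Sum>k\<in>K. f i j k m)"
    by (rule sum.swap)
  also have "\<dots> = (\<Sum>i\<in>I. \<Sum>j\<in>J. \<Sum>m\<in>M. \<Sum>k\<in>K. f i j k m)"
    by (rule sum.cong[OF refl], rule sum.swap)
  also have "\<dots> = (\<Sum>i\<in>I. \<Sum>j\<in>J. \<Sum>k\<in>K. \<Sum>m\<in>M. f i j k m)"
    by (rule sum.cong[OF refl], rule sum.cong[OF refl], rule sum.swap)
  finally show ?thesis .
qed

lemma dot_gradient: "dot (\<lambda>m. cpartial c m x) y = 3 * polar c y x x"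
proof -
  have "dot (\<lambda>m. cpartial c m x) y = (\<Sum>m\<in>UNIV. \<Sum>i\<in>UNIV. \<Sum>j\<in>UNIV. \<Sum>k\<in>UNIV. of_rat (c i j k) *
      ((if i = m then x j * x k else 0) + (if j = m then x i * x k else 0)
       + (if k = m then x i * x j else 0)) * y m)"
    unfolding dot_def cpartial_def sum_distrib_right ..
  also have "\<dots> = (\<Sum>i\<in>UNIV. \<Sum>j\<in>UNIV. \<Sum>k\<in>UNIV. \<Sum>m\<in>UNIV. of_rat (c i j k) *
      ((if i = m then x j * x k else 0) + (if j = m then x i * x k else 0)
       + (if k = m then x i * x j else 0)) * y m)" by (rule sum_swap_innermost)
  also have "\<dots> = (\<Sum>i\<in>UNIV. \<Sum>j\<in>UNIV. \<Sum>k\<in>UNIV. of_rat (c i j k) * (y i * x j * x k + x i * y j * x k + x i * x j * y k))"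
  proof -
    have e: "\<And>a u v w i j k m. a * ((if i = m then u else 0) + (if j = m then v else 0) + (if k = m then w else 0)) * y m
       = (if i = m then a*u*y i else 0) + (if j = m then a*v*y j else 0) + (if k = m then a*w*y k else 0)"
      by (simp add: algebra_simps)
    show ?thesis unfolding e by (simp add: sum.distrib algebra_simps)
  qed
  also have "\<dots> = 3 * polar c y x x"
  proof -
    have "\<And>i j k. of_rat (c i j k) * (y i*x j*x k + y i*x j*x k + x i*y j*x k + x i*x j*y k + x i*y j*x k + x i*x j*y k)
     = 2 * (of_rat (c i j k) * (y i * x j * x k + x i * y j * x k + x i * x j * y k))" by (simp add: algebra_simps)
    then show ?thesis unfolding polar_def by (simp only: sum_distrib_left[symmetric]) simp
  qed
  finally show ?thesis .
qed

lemma dot_gradient_polar: "dot (\<lambda>m. cpartial c m P) x = 3 * polar c P P x"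
  unfolding dot_gradient by (simp add: polar_sym)

lemma in_tangent_iff_polar: "in_tangent c P x \<longleftrightarrow> polar c P P x = 0"
  using dot_gradient_polar[of c P x] unfolding in_tangent_def dot_def by simp

lemma dot_unit_vec: "dot l (unit_vec m) = l m"
  unfolding dot_def unit_vec_def
  by (subst sum.cong[OF refl, of _ _ "\<lambda>i. if i = m then l i else 0"]) auto

lemma dot_lincomb: "dot l (lincomb s x t y) = s * dot l x + t * dot l y"
  unfolding dot_def lincomb_def by (simp add: algebra_simps sum.distrib sum_distrib_left)

lemma dot_remove: "dot l y = l i0 * y i0 + (\<Sum>i\<in>UNIV - {i0}. l i * y i)"
  unfolding dot_def by (simp add: sum.remove)

lemma cpartial_eq_polar: "cpartial c m x = 3 * polar c (unit_vec m) x x"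
  using dot_gradient[of c x "unit_vec m"] by (simp add: dot_unit_vec)

lemma polar_eq_dot: "polar c a b x = dot (\<lambda>m. polar c a b (unit_vec m)) x"
proof -
  have "dot (\<lambda>m. polar c a b (unit_vec m)) x = (\<Sum>m\<in>UNIV. polar c a b (unit_vec m) * x m)" unfolding dot_def ..
  also have "\<dots> = (\<Sum>m\<in>UNIV. (\<Sum>i\<in>UNIV. \<Sum>j\<in>UNIV. \<Sum>k\<in>UNIV. of_rat (c i j k) *
    (a i*b j*unit_vec m k + a i*unit_vec m j*b k + b i*a j*unit_vec m k + b i*unit_vec m j*a k + unit_vec m i*a j*b k + unit_vec m i*b j*a k) * x m) / 6)"
    unfolding polar_def by (simp only: times_divide_eq_left sum_distrib_right)
  also have "\<dots> = (\<Sum>i\<in>UNIV. \<Sum>j\<in>UNIV. \<Sum>k\<in>UNIV. \<Sum>m\<in>UNIV. of_rat (c i j k) *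
    (a i*b j*unit_vec m k + a i*unit_vec m j*b k + b i*a j*unit_vec m k + b i*unit_vec m j*a k + unit_vec m i*a j*b k + unit_vec m i*b j*a k) * x m) / 6"
    unfolding sum_divide_distrib[symmetric] by (rule arg_cong[where f="\<lambda>x. x/6"], rule sum_swap_innermost)
  also have "\<dots> = polar c a b x"
  proof -
    have e: "\<And>i j k. (\<Sum>m\<in>UNIV. of_rat (c i j k) *
    (a i*b j*unit_vec m k + a i*unit_vec m j*b k + b i*a j*unit_vec m k + b i*unit_vec m j*a k + unit_vec m i*a j*b k + unit_vec m i*b j*a k) * x m)
      = of_rat (c i j k) * (a i*b j*x k + a i*x j*b k + b i*a j*x k + b i*x j*a k + x i*a j*b k + x i*b j*a k)"
    proof -
      have r1: "\<And>(a::'a) P. a * (if P then 1 else 0) = (if P then a else 0)" by simp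
      have r3: "\<And>(a::'a) b P. (if P then a else 0) * b = (if P then a*b else 0)" by simp
      have r4: "\<And>(a::'a) b P. b * (if P then a else 0) = (if P then b*a else 0)" by simp
      show "\<And>i j k. ?thesis i j k"
        by (simp only: distrib_left distrib_right sum.distrib unit_vec_def r1 r3 r4) simp
    qed
    show ?thesis unfolding e polar_def ..
  qed
  finally show ?thesis ..
qed

section \<open>Polynomial functions along lines\<close>

definition poly_fun :: "('a::comm_ring_1 \<Rightarrow> 'a) \<Rightarrow> bool" where
  "poly_fun f \<longleftrightarrow> (\<exists>p. \<forall>t. f t = poly p t)"

lemma poly_fun_const[intro]: "poly_fun (\<lambda>t. a)"
  unfolding poly_fun_def by (rule exI[of _ "[:a:]"]) simp

lemma poly_fun_id[intro]: "poly_fun (\<lambda>t. t)"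
  unfolding poly_fun_def by (rule exI[of _ "[:0,1:]"]) simp

lemma poly_fun_add[intro]: "poly_fun f \<Longrightarrow> poly_fun g \<Longrightarrow> poly_fun (\<lambda>t. f t + g t)"
  unfolding poly_fun_def by (metis poly_add)

lemma poly_fun_mult[intro]: "poly_fun f \<Longrightarrow> poly_fun g \<Longrightarrow> poly_fun (\<lambda>t. f t * g t)"
  unfolding poly_fun_def by (metis poly_mult)

lemma poly_fun_uminus[intro]: "poly_fun f \<Longrightarrow> poly_fun (\<lambda>t. - f t)"
  unfolding poly_fun_def by (metis poly_minus)

lemma poly_fun_diff[intro]: "poly_fun f \<Longrightarrow> poly_fun g \<Longrightarrow> poly_fun (\<lambda>t. f t - g t)"
  using poly_fun_add[of f "\<lambda>t. - g t"] poly_fun_uminus[of g] by simp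

lemma poly_fun_sum[intro]: "(\<And>i. i \<in> A \<Longrightarrow> poly_fun (f i)) \<Longrightarrow> poly_fun (\<lambda>t. \<Sum>i\<in>A. f i t)"
  by (induction A rule: infinite_finite_induct) auto

definition poly_on_lines :: "(('n \<Rightarrow> 'a::comm_ring_1) \<Rightarrow> 'a) \<Rightarrow> bool" where
  "poly_on_lines h \<longleftrightarrow> (\<forall>u v. poly_fun (\<lambda>t. h (\<lambda>i. u i + t * v i)))"

definition vpoly_on_lines :: "(('n \<Rightarrow> 'a::comm_ring_1) \<Rightarrow> ('m \<Rightarrow> 'a)) \<Rightarrow> bool" where
  "vpoly_on_lines f \<longleftrightarrow> (\<forall>j. poly_on_lines (\<lambda>x. f x j))"

lemma poly_on_lines_const[intro]: "poly_on_lines (\<lambda>x. a)"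
  unfolding poly_on_lines_def by auto

lemma poly_on_lines_coord[intro]: "poly_on_lines (\<lambda>x. x j)"
  unfolding poly_on_lines_def by (intro allI poly_fun_add poly_fun_mult) auto

lemma poly_on_lines_add[intro]: "poly_on_lines f \<Longrightarrow> poly_on_lines g \<Longrightarrow> poly_on_lines (\<lambda>x. f x + g x)"
  unfolding poly_on_lines_def by auto

lemma poly_on_lines_diff[intro]: "poly_on_lines f \<Longrightarrow> poly_on_lines g \<Longrightarrow> poly_on_lines (\<lambda>x. f x - g x)"
  unfolding poly_on_lines_def by auto

lemma poly_on_lines_mult[intro]: "poly_on_lines f \<Longrightarrow> poly_on_lines g \<Longrightarrow> poly_on_lines (\<lambda>x. f x * g x)"
  unfolding poly_on_lines_def by auto

lemma poly_on_lines_sum[intro]: "(\<And>i. i \<in> A \<Longrightarrow> poly_on_lines (f i)) \<Longrightarrow> poly_on_lines (\<lambda>x. \<Sum>i\<in>A. f i x)"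
  unfolding poly_on_lines_def by (auto intro!: poly_fun_sum)

lemma poly_on_lines_component[intro]: "vpoly_on_lines f \<Longrightarrow> poly_on_lines (\<lambda>x. f x j)"
  unfolding vpoly_on_lines_def by auto

lemma vpoly_on_linesI[intro]: "(\<And>j. poly_on_lines (\<lambda>x. f x j)) \<Longrightarrow> vpoly_on_lines f"
  unfolding vpoly_on_lines_def by auto

lemma vpoly_on_lines_id[intro]: "vpoly_on_lines (\<lambda>x. x)"
  by auto

lemma vpoly_on_lines_const[intro]: "vpoly_on_lines (\<lambda>x. a)"
  by auto

lemma poly_on_lines_polar[intro]:
  "vpoly_on_lines f \<Longrightarrow> vpoly_on_lines g \<Longrightarrow> vpoly_on_lines h \<Longrightarrow> poly_on_lines (\<lambda>x. polar c (f x) (g x) (h x))"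
  unfolding polar_def divide_inverse
  by (intro poly_on_lines_mult poly_on_lines_sum poly_on_lines_add poly_on_lines_const poly_on_lines_component)

lemma poly_on_lines_cform[intro]: "vpoly_on_lines f \<Longrightarrow> poly_on_lines (\<lambda>x. cform c (f x))"
  unfolding cform_eq_polar by auto

lemma poly_on_lines_common_nonzero:
  fixes f g :: "('n \<Rightarrow> 'a::field_char_0) \<Rightarrow> 'a"
  assumes "poly_on_lines f" "poly_on_lines g"
    and V: "\<And>u w t. V u \<Longrightarrow> V w \<Longrightarrow> V (lincomb (1 - t) u t w)"
    and "V u" "f u \<noteq> 0" "V w" "g w \<noteq> 0"
  shows "\<exists>x. V x \<and> f x \<noteq> 0 \<and> g x \<noteq> 0"
proof -
  have e: "\<And>t. lincomb (1 - t) u t w = (\<lambda>i. u i + t * (w i - u i))"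
    unfolding lincomb_def by (auto simp: algebra_simps)
  obtain p where p: "\<And>t. f (\<lambda>i. u i + t * (w i - u i)) = poly p t"
    using assms(1)[unfolded poly_on_lines_def, rule_format, of u "\<lambda>i. w i - u i"] unfolding poly_fun_def by blast
  obtain q where q: "\<And>t. g (\<lambda>i. u i + t * (w i - u i)) = poly q t"
    using assms(2)[unfolded poly_on_lines_def, rule_format, of u "\<lambda>i. w i - u i"] unfolding poly_fun_def by blast
  have "poly p 0 \<noteq> 0" using p[of 0] assms(5) by simp
  moreover have "poly q 1 \<noteq> 0" using q[of 1] assms(7) by simp
  ultimately have "p * q \<noteq> 0" by auto
  then have "finite {x. poly (p * q) x = 0}" by (rule poly_roots_finite)
  then obtain t where "poly (p * q) t \<noteq> 0"
    using infinite_UNIV_char_0[where 'a='a] by (metis (mono_tags, lifting) UNIV_I finite_subset mem_Collect_eq subsetI)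
  moreover have "V (lincomb (1 - t) u t w)" using V assms(4,6) .
  ultimately show ?thesis unfolding e using p[of t] q[of t] by auto
qed

definition of_rat_vec :: "('n \<Rightarrow> rat) \<Rightarrow> ('n \<Rightarrow> 'a::field_char_0)" where
  "of_rat_vec x = (\<lambda>i. of_rat (x i))"

lemma of_rat_vec_rat[simp]: "(of_rat_vec x :: 'n \<Rightarrow> rat) = x"
  unfolding of_rat_vec_def by simp

lemma to_cplx_eq_of_rat_vec: "to_cplx = of_rat_vec"
  unfolding to_cplx_def of_rat_vec_def by (simp add: fun_eq_iff)

lemma polar_of_rat_vec:
  "polar c (of_rat_vec x) (of_rat_vec y) (of_rat_vec z) = (of_rat (polar c x y z) :: 'a::field_char_0)"
  unfolding polar_def of_rat_vec_def by (simp add: of_rat_sum of_rat_mult of_rat_add of_rat_divide)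

lemma cform_of_rat_vec: "cform c (of_rat_vec x) = (of_rat (cform c x) :: 'a::field_char_0)"
  unfolding cform_eq_polar polar_of_rat_vec ..

lemma cpartial_of_rat_vec: "cpartial c m (of_rat_vec x) = (of_rat (cpartial c m x) :: 'a::field_char_0)"
proof -
  have "\<And>b (x::rat). (of_rat (if b then x else 0) :: 'a) = (if b then of_rat x else 0)" by simp
  then show ?thesis unfolding cpartial_def of_rat_vec_def
    by (simp only: of_rat_sum of_rat_mult of_rat_add of_rat_eq_id id_apply)
qed

lemma dot_of_rat_vec: "dot (of_rat_vec l) (of_rat_vec x) = (of_rat (dot l x) :: 'a::field_char_0)"
  unfolding dot_def of_rat_vec_def by (simp add: of_rat_sum of_rat_mult)

text \<open>Zariski density of the rational points: induct on the set of coordinates allowed to be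
  non-rational, using that a polynomial vanishing on \<open>\<rat>\<close> is zero.\<close>
lemma poly_on_lines_zero_from_rat:
  fixes h :: "('n::finite \<Rightarrow> complex) \<Rightarrow> complex"
  assumes "poly_on_lines h" "\<And>x. h (of_rat_vec x) = 0"
  shows "h z = 0"
proof -
  have "\<forall>z. (\<forall>i. i \<notin> S \<longrightarrow> z i \<in> \<rat>) \<longrightarrow> h z = 0" for S :: "'n set"
  proof (induction S rule: infinite_finite_induct)
    case (infinite A) then show ?case by simp
  next
    case empty
    show ?case
    proof (intro allI impI)
      fix z :: "'n \<Rightarrow> complex" assume "\<forall>i. i \<notin> {} \<longrightarrow> z i \<in> \<rat>"
      then have "\<forall>i. \<exists>r. z i = of_rat r" by (auto elim: Rats_cases)
      then obtain x where "\<And>i. z i = of_rat (x i)" by metis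
      then have "z = of_rat_vec x" unfolding of_rat_vec_def by auto
      then show "h z = 0" using assms(2) by simp
    qed
  next
    case (insert a S)
    show ?case
    proof (intro allI impI)
      fix z :: "'n \<Rightarrow> complex" assume z: "\<forall>i. i \<notin> insert a S \<longrightarrow> z i \<in> \<rat>"
      have ez: "(\<lambda>i. (z(a := 0)) i + t * unit_vec a i) = z(a := t)" for t
        unfolding unit_vec_def by auto
      obtain p where p: "\<And>t. h (\<lambda>i. (z(a := 0)) i + t * unit_vec a i) = poly p t"
        using assms(1) unfolding poly_on_lines_def poly_fun_def by blast
      have "poly p t = 0" if "t \<in> \<rat>" for t
      proof -
        have "\<forall>i. i \<notin> S \<longrightarrow> (z(a := t)) i \<in> \<rat>" using z that by auto
        then have "h (z(a:=t)) = 0" using insert.IH by blast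
        then show ?thesis using p[of t] ez[of t] by simp
      qed
      then have "\<rat> \<subseteq> {x. poly p x = 0}" by auto
      then have "p = 0" using poly_roots_finite Rats_infinite finite_subset by blast
      then have "h (z(a := z a)) = 0" using p[of "z a"] ez[of "z a"] by simp
      then show "h z = 0" by simp
    qed
  qed
  then show ?thesis by blast
qed

section \<open>Common zeros of two complex quadrics\<close>

definition bilinear_form :: "(('n \<Rightarrow> 'a::comm_ring_1) \<Rightarrow> ('n \<Rightarrow> 'a) \<Rightarrow> 'a) \<Rightarrow> bool" where
  "bilinear_form B \<longleftrightarrow>
     (\<forall>s x t y z. B (lincomb s x t y) z = s * B x z + t * B y z \<and> B z (lincomb s x t y) = s * B z x + t * B z y)"

definition supported_on :: "'n set \<Rightarrow> ('n \<Rightarrow> 'a::zero) \<Rightarrow> bool" where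
  "supported_on S x \<longleftrightarrow> (\<forall>i. i \<notin> S \<longrightarrow> x i = 0)"

lemma bilinear_form_left: "bilinear_form B \<Longrightarrow> B (lincomb s x t y) z = s * B x z + t * B y z"
  unfolding bilinear_form_def by blast

lemma bilinear_form_right: "bilinear_form B \<Longrightarrow> B z (lincomb s x t y) = s * B z x + t * B z y"
  unfolding bilinear_form_def by blast

lemma bilinear_form_diag_lincomb:
  "bilinear_form B \<Longrightarrow> B (lincomb a x b y) (lincomb a x b y) = a^2 * B x x + a*b*(B x y + B y x) + b^2 * B y y"
  unfolding bilinear_form_def by (simp add: algebra_simps power2_eq_square)

lemma bilinear_form_polar: "bilinear_form (\<lambda>x y. polar c x y w)"
  unfolding bilinear_form_def by (simp add: polar_lincomb)

lemma lincomb_scale: "lincomb (m * a) x (m * b) y = lincomb m (lincomb a x b y) 0 (lincomb a x b y)"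
  unfolding lincomb_def by (auto simp: algebra_simps)

lemma isotropic_in_plane:
  fixes B :: "('n \<Rightarrow> complex) \<Rightarrow> ('n \<Rightarrow> complex) \<Rightarrow> complex"
  assumes "bilinear_form B"
  shows "\<exists>a b. (a \<noteq> 0 \<or> b \<noteq> 0) \<and> B (lincomb a u b v) (lincomb a u b v) = 0"
proof (cases "B u u = 0")
  case True
  then show ?thesis by (intro exI[of _ 1] exI[of _ 0]) (simp add: bilinear_form_diag_lincomb[OF assms])
next
  case False
  define s where "s = B u v + B v u"
  define D where "D = csqrt (s^2 - 4 * B u u * B v v)"
  define a where "a = (-s + D) / (2 * B u u)"
  have D2: "D^2 = s^2 - 4 * B u u * B v v" unfolding D_def by simp
  have aD: "2 * B u u * a + s = D" unfolding a_def using False by (simp add: field_simps)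
  have "4 * B u u * (B u u * a^2 + s * a + B v v) = (2 * B u u * a + s)^2 - (s^2 - 4 * B u u * B v v)"
    by (simp add: algebra_simps power2_eq_square)
  also have "\<dots> = 0" unfolding aD D2 by simp
  finally have "B u u * a^2 + s * a + B v v = 0" using False by simp
  then show ?thesis
    by (intro exI[of _ a] exI[of _ 1]) (simp add: bilinear_form_diag_lincomb[OF assms] s_def algebra_simps power2_eq_square)
qed

lemma homogeneous_quartic_zero:
  fixes f :: "complex \<Rightarrow> complex \<Rightarrow> complex"
  assumes poly1: "poly_fun (\<lambda>t. f 1 t)" and poly2: "poly_fun (\<lambda>t. f t 1)"
    and hom: "\<And>m a b. f (m * a) (m * b) = m^4 * f a b"
  shows "\<exists>a b. (a \<noteq> 0 \<or> b \<noteq> 0) \<and> f a b = 0"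
proof (rule ccontr)
  assume nr: "\<not> ?thesis"
  have const: "g t = g 0" if "poly_fun g" "\<And>t. g t \<noteq> 0" for g :: "complex \<Rightarrow> complex" and t
  proof -
    obtain p where p: "\<And>t. g t = poly p t" using \<open>poly_fun g\<close> unfolding poly_fun_def by blast
    have "constant (poly p)" using fundamental_theorem_of_algebra that(2) unfolding p by blast
    then show ?thesis unfolding p constant_def by metis
  qed
  have c1: "f 1 t = f 1 0" for t using const[OF poly1] nr by (metis one_neq_zero)
  have c2: "f t 1 = f 0 1" for t using const[OF poly2] nr by (metis one_neq_zero)
  have "f 2 1 = 16 * f 1 (1/2)" using hom[of 2 1 "1/2"] by simp
  then have "f 1 0 = 16 * f 1 0" using c1[of "1/2"] c1[of 1] c2[of 2] c2[of 1] by simp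
  then have "f 1 0 = 0" by simp
  then show False using nr by (metis one_neq_zero)
qed

lemma common_isotropic_coord3_aux:
  fixes B1 B2 :: "('n \<Rightarrow> complex) \<Rightarrow> ('n \<Rightarrow> complex) \<Rightarrow> complex"
  assumes b1: "bilinear_form B1" and b2: "bilinear_form B2" and ij: "i \<noteq> j" "i \<noteq> l" "j \<noteq> l"
    and p: "p = lincomb \<alpha> (unit_vec i) \<beta> (unit_vec j)" and bet: "\<beta> \<noteq> 0" and pp: "B1 p p = 0"
  shows "\<exists>x. x \<noteq> (\<lambda>_. 0) \<and> supported_on {i,j,l} x \<and> B1 x x = 0 \<and> B2 x x = 0"
proof -
  define w1 :: "'n \<Rightarrow> complex" where "w1 = unit_vec l"
  define w2 :: "'n \<Rightarrow> complex" where "w2 = unit_vec i"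
  txt \<open>\<open>X w\<close> is the second intersection of the line through \<open>p\<close> and \<open>w\<close> with the
    quadric \<open>B1 x x = 0\<close>; a zero of the quartic binary form \<open>f\<close> makes it isotropic for \<open>B2\<close> too.\<close>
  define X where "X w = lincomb (-(B1 w w)) p (B1 p w + B1 w p) w" for w
  define f where "f a b = B2 (X (lincomb a w1 b w2)) (X (lincomb a w1 b w2))" for a b
  have Xs: "X (lincomb m w 0 w) = lincomb (m^2) (X w) 0 (X w)" for m w
  proof -
    have e1: "B1 p (lincomb m w 0 w) = m * B1 p w" by (simp add: bilinear_form_right[OF b1])
    have e2: "B1 (lincomb m w 0 w) p = m * B1 w p" by (simp add: bilinear_form_left[OF b1])
    have e3: "B1 (lincomb m w 0 w) (lincomb m w 0 w) = m^2 * B1 w w" by (simp add: bilinear_form_diag_lincomb[OF b1])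
    show ?thesis unfolding X_def e1 e2 e3 by (simp add: lincomb_def fun_eq_iff algebra_simps power2_eq_square)
  qed
  have hom: "f (m*a) (m*b) = m^4 * f a b" for m a b
    unfolding f_def lincomb_scale Xs bilinear_form_diag_lincomb[OF b2] by (simp add: power2_eq_square power4_eq_xxxx)
  have fexp: "f a b = (B1 (lincomb a w1 b w2) (lincomb a w1 b w2))^2 * B2 p p
     - B1 (lincomb a w1 b w2) (lincomb a w1 b w2) * (a * (B1 p w1 + B1 w1 p) + b * (B1 p w2 + B1 w2 p)) * (a * (B2 p w1 + B2 w1 p) + b * (B2 p w2 + B2 w2 p))
     + (a * (B1 p w1 + B1 w1 p) + b * (B1 p w2 + B1 w2 p))^2 * B2 (lincomb a w1 b w2) (lincomb a w1 b w2)" for a b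
    unfolding f_def X_def bilinear_form_diag_lincomb[OF b2] bilinear_form_left[OF b1] bilinear_form_right[OF b1] bilinear_form_left[OF b2] bilinear_form_right[OF b2]
    by (simp add: algebra_simps power2_eq_square)
  have poly1: "poly_fun (\<lambda>t. f 1 t)" unfolding fexp bilinear_form_diag_lincomb[OF b1] bilinear_form_diag_lincomb[OF b2] power2_eq_square
    by (intro poly_fun_add poly_fun_mult poly_fun_diff poly_fun_const poly_fun_id)
  have poly2: "poly_fun (\<lambda>t. f t 1)" unfolding fexp bilinear_form_diag_lincomb[OF b1] bilinear_form_diag_lincomb[OF b2] power2_eq_square
    by (intro poly_fun_add poly_fun_mult poly_fun_diff poly_fun_const poly_fun_id)
  obtain a b where ab: "a \<noteq> 0 \<or> b \<noteq> 0" and fab: "f a b = 0"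
    using homogeneous_quartic_zero[OF poly1 poly2 hom] by blast
  define w where "w = lincomb a w1 b w2"
  define x where "x = X w"
  have pc: "p k = (if k = i then \<alpha> else if k = j then \<beta> else 0)" for k
    unfolding p lincomb_def unit_vec_def using ij by auto
  have wc: "w k = (if k = l then a else if k = i then b else 0)" for k
    unfolding w_def lincomb_def w1_def w2_def unit_vec_def using ij by auto
  have x1: "B1 x x = 0" unfolding x_def X_def bilinear_form_diag_lincomb[OF b1] pp by (simp add: algebra_simps power2_eq_square)
  have x2: "B2 x x = 0" using fab unfolding f_def x_def w_def .
  have sx: "supported_on {i,j,l} x" unfolding supported_on_def x_def X_def lincomb_def using pc wc by auto
  show ?thesis
  proof (cases "x = (\<lambda>_. 0)")
    case False then show ?thesis using x1 x2 sx by blast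
  next
    case True
    txt \<open>Then \<open>B1\<close> vanishes on the plane spanned by \<open>p\<close> and \<open>w\<close>, and any
      \<open>B2\<close>-isotropic vector of that plane will do.\<close>
    have xc: "x k = - B1 w w * p k + (B1 p w + B1 w p) * w k" for k unfolding x_def X_def lincomb_def ..
    have "x j = 0" using True by simp
    then have ww: "B1 w w = 0" using xc[of j] pc[of j] wc[of j] ij bet by auto
    have "x l = 0" "x i = 0" using True by auto
    then have sg: "B1 p w + B1 w p = 0" using xc[of l] xc[of i] pc wc ij ab ww by auto
    obtain g d where gd: "g \<noteq> 0 \<or> d \<noteq> 0" and y2: "B2 (lincomb g p d w) (lincomb g p d w) = 0"
      using isotropic_in_plane[OF b2, of p w] by blast
    define y where "y = lincomb g p d w"
    have y1: "B1 y y = 0" unfolding y_def bilinear_form_diag_lincomb[OF b1] pp ww sg by simp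
    have yc: "y k = g * p k + d * w k" for k unfolding y_def lincomb_def ..
    have "y \<noteq> (\<lambda>_. 0)"
    proof
      assume y0: "y = (\<lambda>_. 0)"
      have "y j = 0" "y l = 0" "y i = 0" using y0 by auto
      then have "g = 0" using yc[of j] pc wc ij bet by auto
      then show False using \<open>y l = 0\<close> \<open>y i = 0\<close> yc pc wc ij gd ab by auto
    qed
    moreover have "supported_on {i,j,l} y" unfolding supported_on_def using yc pc wc by auto
    ultimately show ?thesis using y1 y2 unfolding y_def by blast
  qed
qed

lemma common_isotropic_coord3:
  fixes B1 B2 :: "('n \<Rightarrow> complex) \<Rightarrow> ('n \<Rightarrow> complex) \<Rightarrow> complex"
  assumes b1: "bilinear_form B1" and b2: "bilinear_form B2" and ij: "i \<noteq> j" "i \<noteq> l" "j \<noteq> l"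
  shows "\<exists>x. x \<noteq> (\<lambda>_. 0) \<and> supported_on {i,j,l} x \<and> B1 x x = 0 \<and> B2 x x = 0"
proof -
  obtain a b where ab: "a \<noteq> 0 \<or> b \<noteq> 0"
    and z: "B1 (lincomb a (unit_vec i) b (unit_vec j)) (lincomb a (unit_vec i) b (unit_vec j)) = 0"
    using isotropic_in_plane[OF b1, of "unit_vec i" "unit_vec j"] by blast
  show ?thesis
  proof (cases "b = 0")
    case False
    show ?thesis using common_isotropic_coord3_aux[where p="lincomb a (unit_vec i) b (unit_vec j)", OF b1 b2 ij refl False z] .
  next
    case True
    then have a: "a \<noteq> 0" using ab by simp
    have "lincomb a (unit_vec i) b (unit_vec j) = lincomb b (unit_vec j) a (unit_vec i)"
      unfolding lincomb_def by (auto simp: fun_eq_iff)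
    with z have z': "B1 (lincomb b (unit_vec j) a (unit_vec i)) (lincomb b (unit_vec j) a (unit_vec i)) = 0"
      by simp
    have "j \<noteq> i" "j \<noteq> l" "i \<noteq> l" using ij by auto
    from common_isotropic_coord3_aux[where p="lincomb b (unit_vec j) a (unit_vec i)", OF b1 b2 this refl a z']
    obtain x where "x \<noteq> (\<lambda>_. 0)" "supported_on {j,i,l} x" "B1 x x = 0" "B2 x x = 0" by blast
    moreover have "{j,i,l} = {i,j,l}" by auto
    ultimately show ?thesis by auto
  qed
qed

definition solve_coord :: "('n \<Rightarrow> 'a::field) \<Rightarrow> 'n \<Rightarrow> ('n \<Rightarrow> 'a) \<Rightarrow> ('n \<Rightarrow> 'a)" where
  "solve_coord l i0 x = x(i0 := - (\<Sum>i\<in>UNIV - {i0}. l i * x i) / l i0)"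

definition reduce_form :: "('n \<Rightarrow> 'a::field) \<Rightarrow> 'n \<Rightarrow> ('n \<Rightarrow> 'a) \<Rightarrow> ('n \<Rightarrow> 'a)" where
  "reduce_form l i0 l' = (\<lambda>j. if j = i0 then 0 else l' j - l' i0 * l j / l i0)"

lemma solve_coord_lincomb:
  "solve_coord l i0 (lincomb s x t y) = lincomb s (solve_coord l i0 x) t (solve_coord l i0 y)"
proof -
  have e: "(\<Sum>i\<in>UNIV-{i0}. l i * (s * x i + t * y i)) = s * (\<Sum>i\<in>UNIV-{i0}. l i * x i) + t * (\<Sum>i\<in>UNIV-{i0}. l i * y i)"
    by (simp add: sum.distrib sum_distrib_left algebra_simps)
  have h: "\<And>A B L. (- (s*A + t*B)) / L = s * (- A / L) + t * (- B / L)"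
    by (simp add: add_divide_distrib[symmetric] algebra_simps)
  show ?thesis unfolding solve_coord_def lincomb_def fun_eq_iff
    by (simp only: e h fun_upd_apply split: if_split) simp
qed

lemma solve_coord_other: "i \<noteq> i0 \<Longrightarrow> solve_coord l i0 x i = x i"
  unfolding solve_coord_def by simp

lemma bilinear_form_solve_coord:
  "bilinear_form B \<Longrightarrow> bilinear_form (\<lambda>x y. B (solve_coord l i0 x) (solve_coord l i0 y))"
  unfolding bilinear_form_def solve_coord_lincomb by simp

lemma dot_solve_coord_self:
  fixes l :: "'n::finite \<Rightarrow> 'a::field"
  assumes "l i0 \<noteq> 0"
  shows "dot l (solve_coord l i0 x) = 0"
  unfolding dot_remove[of l _ i0] using assms by (simp add: solve_coord_def)

lemma dot_solve_coord:
  fixes l l' :: "'n::finite \<Rightarrow> 'a::field"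
  assumes "l i0 \<noteq> 0" "x i0 = 0"
  shows "dot l' (solve_coord l i0 x) = dot (reduce_form l i0 l') x"
proof -
  have "dot (reduce_form l i0 l') x = (\<Sum>i\<in>UNIV - {i0}. (l' i - l' i0 * l i / l i0) * x i)"
    unfolding dot_remove[of _ x i0] using assms(2) by (auto simp: reduce_form_def intro: sum.cong)
  also have "\<dots> = (\<Sum>i\<in>UNIV - {i0}. l' i * x i) - l' i0 / l i0 * (\<Sum>i\<in>UNIV - {i0}. l i * x i)"
    by (simp add: algebra_simps sum_subtractf sum_distrib_left)
  also have "\<dots> = dot l' (solve_coord l i0 x)"
    unfolding dot_remove[of l' _ i0] by (simp add: solve_coord_def algebra_simps)
  finally show ?thesis ..
qed

text \<open>Two quadrics in a projective space cut out by \<open>k\<close> linear forms on \<open>k + 3\<close> coordinates meet: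
  eliminate one coordinate per linear form and finish in three coordinates.\<close>
lemma common_isotropic_in_subspace:
  fixes B1 B2 :: "('n::finite \<Rightarrow> complex) \<Rightarrow> ('n \<Rightarrow> complex) \<Rightarrow> complex"
  assumes "bilinear_form B1" "bilinear_form B2" "card S \<ge> length Ls + 3"
  shows "\<exists>x. x \<noteq> (\<lambda>_. 0) \<and> supported_on S x \<and> (\<forall>l\<in>set Ls. dot l x = 0) \<and> B1 x x = 0 \<and> B2 x x = 0"
  using assms
proof (induction "length Ls" arbitrary: Ls S B1 B2)
  case 0
  then have Ls: "Ls = []" by simp
  obtain T where T: "T \<subseteq> S" "card T = 3"
    using obtain_subset_with_card_n[of 3 S] "0.prems"(3) Ls by auto
  then obtain i j l where ijl: "T = {i,j,l}" "i \<noteq> j" "i \<noteq> l" "j \<noteq> l"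
    by (auto simp: card_3_iff)
  then obtain x where "x \<noteq> (\<lambda>_. 0)" "supported_on {i,j,l} x" "B1 x x = 0" "B2 x x = 0"
    using common_isotropic_coord3[OF "0.prems"(1,2)] by blast
  moreover have "supported_on S x" using \<open>supported_on {i,j,l} x\<close> T ijl unfolding supported_on_def by auto
  ultimately show ?case using Ls by auto
next
  case (Suc k)
  obtain l Ls0 where Ls: "Ls = l # Ls0" and len: "k = length Ls0" using Suc.hyps(2) by (cases Ls) auto
  show ?case
  proof (cases "\<forall>i\<in>S. l i = 0")
    case True
    have "card S \<ge> length Ls0 + 3" using Suc.prems(3) Ls by simp
    from Suc.hyps(1)[OF len Suc.prems(1,2) this]
    obtain x where x: "x \<noteq> (\<lambda>_. 0)" "supported_on S x" "\<forall>l\<in>set Ls0. dot l x = 0" "B1 x x = 0" "B2 x x = 0"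
      by blast
    have "dot l x = 0" unfolding dot_def using True x(2) unfolding supported_on_def
      by (intro sum.neutral) auto
    then show ?thesis using x Ls by auto
  next
    case False
    then obtain i0 where i0: "i0 \<in> S" "l i0 \<noteq> 0" by blast
    have "finite S" using Suc.prems(3) card.infinite by fastforce
    then have "card (S - {i0}) \<ge> length (map (reduce_form l i0) Ls0) + 3"
      using Suc.prems(3) i0 Ls by (simp add: card_Diff_singleton)
    from Suc.hyps(1)[of "map (reduce_form l i0) Ls0", OF _ bilinear_form_solve_coord[OF Suc.prems(1), of l i0]
        bilinear_form_solve_coord[OF Suc.prems(2), of l i0] this] len
    obtain x where x: "x \<noteq> (\<lambda>_. 0)" "supported_on (S - {i0}) x"
        "\<forall>l'\<in>set Ls0. dot (reduce_form l i0 l') x = 0"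
        "B1 (solve_coord l i0 x) (solve_coord l i0 x) = 0" "B2 (solve_coord l i0 x) (solve_coord l i0 x) = 0"
      by auto
    define y where "y = solve_coord l i0 x"
    have xi0: "x i0 = 0" using x(2) unfolding supported_on_def by auto
    have yi: "y i = x i" if "i \<noteq> i0" for i unfolding y_def using that by (rule solve_coord_other)
    have "y \<noteq> (\<lambda>_. 0)"
    proof
      assume "y = (\<lambda>_. 0)"
      then have "x i = 0" for i using yi xi0 by (cases "i = i0") auto
      then show False using x(1) by auto
    qed
    moreover have "supported_on S y" using x(2) yi i0(1) unfolding supported_on_def by (metis Diff_iff singletonD)
    moreover have "dot l y = 0" unfolding y_def using dot_solve_coord_self[of l i0] i0(2) by blast
    moreover have "dot l' y = 0" if "l' \<in> set Ls0" for l'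
      using x(3) that unfolding y_def dot_solve_coord[of l i0 x, OF i0(2) xi0] by blast
    ultimately show ?thesis using Ls x(4,5) unfolding y_def by auto
  qed
qed

section \<open>Smooth cubics contain no linear space of codimension two\<close>

definition hyperplane_proj :: "('n::finite \<Rightarrow> rat) \<Rightarrow> ('n \<Rightarrow> rat) \<Rightarrow> ('n \<Rightarrow> 'a::field_char_0) \<Rightarrow> ('n \<Rightarrow> 'a)" where
 "hyperplane_proj l v y = (\<lambda>i. y i - (dot (of_rat_vec l) y / dot (of_rat_vec l) (of_rat_vec v)) * of_rat_vec v i)"

lemma hyperplane_proj_of_rat_vec: "hyperplane_proj l v (of_rat_vec x) = (of_rat_vec (hyperplane_proj l v x) :: 'n::finite \<Rightarrow> 'a::field_char_0)"
  unfolding hyperplane_proj_def dot_of_rat_vec by (simp add: of_rat_vec_def of_rat_diff of_rat_mult of_rat_divide)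

lemma dot_hyperplane_proj: "dot (of_rat_vec m) (hyperplane_proj l v y) = dot (of_rat_vec m) y - (dot (of_rat_vec l) y / dot (of_rat_vec l) (of_rat_vec v)) * dot (of_rat_vec m) (of_rat_vec v)"
proof -
  have "\<And>k. dot (of_rat_vec m) (\<lambda>i. y i - k * of_rat_vec v i) = dot (of_rat_vec m) y - k * dot (of_rat_vec m) (of_rat_vec v)"
    by (simp add: dot_def algebra_simps sum_subtractf sum_distrib_left)
  then show ?thesis unfolding hyperplane_proj_def .
qed

lemma dot_hyperplane_proj_self: "dot (of_rat_vec l) (of_rat_vec v) \<noteq> (0::'a::field_char_0) \<Longrightarrow> dot (of_rat_vec l) (hyperplane_proj l v (y::'n::finite \<Rightarrow> 'a)) = 0"
  unfolding dot_hyperplane_proj by simp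

lemma hyperplane_proj_id: "dot (of_rat_vec l) y = 0 \<Longrightarrow> hyperplane_proj l v y = y"
  unfolding hyperplane_proj_def by simp

lemma vpoly_on_lines_hyperplane_proj_comp: assumes "vpoly_on_lines f" shows "vpoly_on_lines (\<lambda>x. hyperplane_proj l v (f x))"
  unfolding hyperplane_proj_def dot_def divide_inverse
  by (intro vpoly_on_linesI poly_on_lines_diff poly_on_lines_mult poly_on_lines_sum poly_on_lines_const poly_on_lines_component[OF assms])

definition codim2_proj :: "('n::finite \<Rightarrow> rat) \<Rightarrow> ('n \<Rightarrow> rat) \<Rightarrow> ('n \<Rightarrow> rat) \<Rightarrow> ('n \<Rightarrow> rat) \<Rightarrow> ('n \<Rightarrow> 'a::field_char_0) \<Rightarrow> ('n \<Rightarrow> 'a)" where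
  "codim2_proj gv mu v1 v2 y = hyperplane_proj mu v2 (hyperplane_proj gv v1 y)"

context
  fixes gv mu v1 v2 :: "'n::finite \<Rightarrow> rat"
  assumes h1: "dot gv v1 \<noteq> 0" and h2: "dot mu v2 \<noteq> 0" and h3: "dot gv v2 = 0"
begin

lemma dot_codim2_proj_fst: "dot (of_rat_vec gv) (codim2_proj gv mu v1 v2 y) = (0::'a::field_char_0)"
proof -
  have g1: "dot (of_rat_vec gv) (of_rat_vec v1) \<noteq> (0::'a)" using h1 by (simp add: dot_of_rat_vec)
  have g3: "dot (of_rat_vec gv) (of_rat_vec v2) = (0::'a)" using h3 by (simp add: dot_of_rat_vec)
  have "dot (of_rat_vec gv) (hyperplane_proj mu v2 Y) = dot (of_rat_vec gv) Y" for Y :: "'n \<Rightarrow> 'a"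
    using dot_hyperplane_proj[of gv mu v2 Y] g3 by simp
  then show ?thesis unfolding codim2_proj_def using dot_hyperplane_proj_self[OF g1, of y] by simp
qed

lemma dot_codim2_proj_snd: "dot (of_rat_vec mu) (codim2_proj gv mu v1 v2 y) = (0::'a::field_char_0)"
proof -
  have g2: "dot (of_rat_vec mu) (of_rat_vec v2) \<noteq> (0::'a)" using h2 by (simp add: dot_of_rat_vec)
  show ?thesis unfolding codim2_proj_def using dot_hyperplane_proj_self[OF g2] by simp
qed

end

lemma codim2_proj_id: "dot (of_rat_vec gv) y = 0 \<Longrightarrow> dot (of_rat_vec mu) y = 0 \<Longrightarrow> codim2_proj gv mu v1 v2 y = y"
  unfolding codim2_proj_def by (simp add: hyperplane_proj_id)

lemma codim2_proj_of_rat_vec: "codim2_proj gv mu v1 v2 (of_rat_vec x) = (of_rat_vec (codim2_proj gv mu v1 v2 x) :: 'n::finite \<Rightarrow> 'a::field_char_0)"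
  unfolding codim2_proj_def hyperplane_proj_of_rat_vec ..

lemma vpoly_on_lines_codim2_proj: "vpoly_on_lines (codim2_proj gv mu v1 v2)"
  unfolding codim2_proj_def by (intro vpoly_on_lines_hyperplane_proj_comp vpoly_on_lines_id)

lemma codim2_proj_decomp: "y = lincomb (dot (of_rat_vec gv) y / dot (of_rat_vec gv) (of_rat_vec v1)) (of_rat_vec v1) 1
    (lincomb (dot (of_rat_vec mu) (hyperplane_proj gv v1 y) / dot (of_rat_vec mu) (of_rat_vec v2)) (of_rat_vec v2) 1 (codim2_proj gv mu v1 v2 y))"
  unfolding codim2_proj_def lincomb_def hyperplane_proj_def[of mu v2] by (simp add: hyperplane_proj_def)

lemma cform_codim2_proj_zero:
  fixes c :: "('n::finite) cubic" and gv mu v1 v2 :: "'n \<Rightarrow> rat" and z :: "'n \<Rightarrow> complex"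
  assumes h1: "dot gv v1 \<noteq> 0" and h2: "dot mu v2 \<noteq> 0" and h3: "dot gv v2 = 0"
    and M: "\<And>x. dot gv x = 0 \<Longrightarrow> dot mu x = 0 \<Longrightarrow> cform c x = 0"
  shows "cform c (codim2_proj gv mu v1 v2 z) = 0"
proof (rule poly_on_lines_zero_from_rat[where h="\<lambda>z. cform c (codim2_proj gv mu v1 v2 z)"])
  show "poly_on_lines (\<lambda>z. cform c (codim2_proj gv mu v1 v2 (z :: 'n \<Rightarrow> complex)))"
    by (intro poly_on_lines_cform vpoly_on_lines_codim2_proj)
  fix x :: "'n \<Rightarrow> rat"
  have "cform c (codim2_proj gv mu v1 v2 x) = 0"
    using M dot_codim2_proj_fst[OF h1 h2 h3, of x] dot_codim2_proj_snd[OF h1 h2 h3, of x] by simp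
  then show "cform c (codim2_proj gv mu v1 v2 (of_rat_vec x) :: 'n \<Rightarrow> complex) = 0"
    unfolding codim2_proj_of_rat_vec cform_of_rat_vec by simp
qed

text \<open>If \<open>X\<close> contained the codimension-2 space \<open>L = {gv = 0, mu = 0}\<close>, pick \<open>x \<in> L\<close> on both
  quadrics \<open>polar c x x v1 = 0\<close> and \<open>polar c x x v2 = 0\<close> (possible as \<open>dim L \<ge> 3\<close>).  The gradient at
  \<open>x\<close> then vanishes along \<open>L\<close>, since \<open>X\<close> contains \<open>L\<close>, and in the directions \<open>v1\<close>, \<open>v2\<close> complementary
  to \<open>L\<close>, so \<open>x\<close> is a singular point.\<close>
lemma smooth_cubic_no_codim2_subspace:
  fixes c :: "('n::finite) cubic" and gv mu v1 v2 :: "'n \<Rightarrow> rat"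
  assumes card: "CARD('n) \<ge> 5" and sm: "smooth_cubic c"
    and h1: "dot gv v1 \<noteq> 0" and h2: "dot mu v2 \<noteq> 0" and h3: "dot gv v2 = 0"
    and M: "\<And>x. dot gv x = 0 \<Longrightarrow> dot mu x = 0 \<Longrightarrow> cform c x = 0"
  shows False
proof -
  note proj_zero = cform_codim2_proj_zero[OF h1 h2 h3 M]
  have on_L: "cform c y = 0" if "dot (of_rat_vec gv) y = 0" "dot (of_rat_vec mu) y = 0" for y :: "'n \<Rightarrow> complex"
    using proj_zero[of y] codim2_proj_id[OF that] by simp
  have "card (UNIV :: 'n set) \<ge> length [of_rat_vec gv, of_rat_vec mu] + 3" using card by simp
  from common_isotropic_in_subspace[OF bilinear_form_polar[of c "of_rat_vec v1"] bilinear_form_polar[of c "of_rat_vec v2"] this]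
  obtain x :: "'n \<Rightarrow> complex" where x: "x \<noteq> (\<lambda>_. 0)" "dot (of_rat_vec gv) x = 0" "dot (of_rat_vec mu) x = 0"
      "polar c x x (of_rat_vec v1) = 0" "polar c x x (of_rat_vec v2) = 0"
    by auto
  have "cpartial c m x = 0" for m
  proof -
    define Y where "Y = codim2_proj gv mu v1 v2 (unit_vec m :: 'n \<Rightarrow> complex)"
    obtain a b where dec: "unit_vec m = lincomb a (of_rat_vec v1) 1 (lincomb b (of_rat_vec v2) 1 Y)"
      using codim2_proj_decomp unfolding Y_def by blast
    have Y_L: "dot (of_rat_vec gv) Y = 0" "dot (of_rat_vec mu) Y = 0"
      unfolding Y_def using dot_codim2_proj_fst[OF h1 h2 h3] dot_codim2_proj_snd[OF h1 h2 h3] by auto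
    have "cform c (lincomb 1 x 1 Y) - cform c (lincomb 1 x (-1) Y) = 6 * polar c x x Y + 2 * cform c Y"
      unfolding cform_lincomb by (simp add: cform_eq_polar)
    moreover have "cform c (lincomb 1 x 1 Y) = 0" "cform c (lincomb 1 x (-1) Y) = 0"
      using x Y_L by (auto intro!: on_L simp: dot_lincomb)
    moreover have "cform c Y = 0" unfolding Y_def by (rule proj_zero)
    ultimately have "polar c Y x x = 0" by (simp add: polar_sym)
    moreover have "polar c (of_rat_vec v1) x x = 0" "polar c (of_rat_vec v2) x x = 0"
      using x(4,5) polar_sym by metis+
    ultimately have "polar c (unit_vec m) x x = 0"
      by (subst dec) (simp only: polar_lincomb1 mult_zero_right add_0)
    then show ?thesis unfolding cpartial_eq_polar by simp
  qed
  then have "x = (\<lambda>_. 0)" using sm unfolding smooth_cubic_def by blast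
  then show False using x(1) by simp
qed

section \<open>Lines through points of the span\<close>

lemma polar_separates_independent:
  fixes U W :: "'n::finite \<Rightarrow> rat"
  assumes "U \<noteq> (\<lambda>_. 0)" "polar c A B U = 0" "polar c A B W \<noteq> 0"
  shows "\<forall>s t. (\<forall>i. s * U i + t * W i = 0) \<longrightarrow> s = 0 \<and> t = 0"
proof (intro allI impI)
  fix s t assume h: "\<forall>i. s * U i + t * W i = 0"
  then have "lincomb s U t W = (\<lambda>_. 0)" unfolding lincomb_def by auto
  then have "polar c A B (lincomb s U t W) = 0" by simp
  then have t: "t = 0" using assms(2,3) by (simp add: polar_lincomb)
  then have "\<forall>i. s * U i = 0" using h by simp
  then have "s = 0" using assms(1) by (metis (full_types) ext mult_eq_0_iff)
  then show "s = 0 \<and> t = 0" using t by simp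
qed

lemma line_meets_lincomb:
  assumes "\<forall>s t. (\<forall>i. s * A i + t * B i = 0) \<longrightarrow> s = 0 \<and> t = 0"
    and "(p1, p2) \<noteq> (0, 0)" "(q1, q2) \<noteq> (0, 0)" "(r1, r2) \<noteq> (0, 0)" "k \<noteq> 0"
    and "\<And>s t. cform c (lincomb s A t B) = k * (p2 * s - p1 * t) * (q2 * s - q1 * t) * (r2 * s - r1 * t)"
  shows "line_meets c (lincomb p1 A p2 B) (lincomb q1 A q2 B) (lincomb r1 A r2 B)"
  unfolding line_meets_def
  by (rule exI[of _ A], rule exI[of _ B], rule conjI[OF assms(1)],
      rule exI[of _ p1], rule exI[of _ p2], rule exI[of _ q1], rule exI[of _ q2], rule exI[of _ r1],
      rule exI[of _ r2], rule exI[of _ 1], rule exI[of _ 1], rule exI[of _ 1], rule exI[of _ k])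
    (use assms(2-6) in \<open>simp add: lincomb_def\<close>)

lemma lincomb_1_0 [simp]: "lincomb 1 A 0 B = A" and lincomb_0_1 [simp]: "lincomb 0 A 1 B = B"
  unfolding lincomb_def by simp_all

lemma qspan_self: "P \<in> qspan c P"
  using qspan.base[of 1 P c] by simp

text \<open>The line through \<open>U\<close> and \<open>W\<close> is tangent to \<open>X\<close> at \<open>U\<close>, so it meets \<open>X\<close> in \<open>2 U + W\<close>.\<close>
lemma qspan_tangent_line:
  fixes U W :: "'n::finite \<Rightarrow> rat"
  assumes U: "U \<in> qspan c P0" and U0: "U \<noteq> (\<lambda>_. 0)" and FU: "polar c U U U = 0" and FW: "polar c W W W = 0"
    and UUW: "polar c U U W = 0" and UWW: "polar c U W W \<noteq> 0"
  shows "W \<in> qspan c P0"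
proof -
  have "polar c U W U = 0" using UUW polar_sym by metis
  then have ind: "\<forall>s t. (\<forall>i. s * U i + t * W i = 0) \<longrightarrow> s = 0 \<and> t = 0"
    using polar_separates_independent[OF U0 _ UWW] by blast
  have "cform c (lincomb s U t W) = (3 * polar c U W W) * (0 * s - 1 * t) * (0 * s - 1 * t) * (1 * s - 0 * t)" for s t
    unfolding cform_lincomb FU FW UUW by (simp add: power2_eq_square)
  from line_meets_lincomb[OF ind _ _ _ _ this] have "line_meets c U U W"
    using UWW by simp
  then show ?thesis using qspan.step[OF U U] by blast
qed

text \<open>The line through \<open>Q\<close> and \<open>A\<close> meets \<open>X\<close> in \<open>Q\<close>, \<open>A\<close> and the displayed third point.\<close>
lemma qspan_secant_line:
  fixes Q A :: "'n::finite \<Rightarrow> rat"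
  assumes A: "A \<in> qspan c P0" and B: "lincomb (polar c Q A A) Q (- polar c Q Q A) A \<in> qspan c P0"
    and Q0: "Q \<noteq> (\<lambda>_. 0)" and FQ: "polar c Q Q Q = 0" and FA: "polar c A A A = 0" and QQA: "polar c Q Q A \<noteq> 0"
  shows "Q \<in> qspan c P0"
proof -
  have ind: "\<forall>s t. (\<forall>i. s * Q i + t * A i = 0) \<longrightarrow> s = 0 \<and> t = 0"
    using polar_separates_independent[OF Q0 FQ QQA] .
  have "cform c (lincomb s Q t A)
      = 3 * (1 * s - 0 * t) * ((- polar c Q Q A) * s - (polar c Q A A) * t) * (0 * s - 1 * t)" for s t
    unfolding cform_lincomb FQ FA by (simp add: power2_eq_square algebra_simps)
  from line_meets_lincomb[OF ind _ _ _ _ this] have "line_meets c A (lincomb (polar c Q A A) Q (- polar c Q Q A) A) Q"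
    using QQA by simp
  then show ?thesis using qspan.step[OF A B] by blast
qed

lemma tangent_line_third_point:
  assumes FP: "polar c P P P = 0" and PPR: "polar c P P R = 0"
  defines "A \<equiv> lincomb (- polar c R R R) P (3 * polar c P R R) R"
  shows "polar c A A A = 0" "polar c P P A = 0" "polar c P A A = 9 * (polar c P R R)^3"
  unfolding A_def using FP PPR
  by (simp_all add: polar_lincomb polar_sym algebra_simps power2_eq_square power3_eq_cube)

lemma secant_line_third_point:
  assumes FQ: "polar c Q Q Q = 0" and FA: "polar c A A A = 0"
  shows "polar c (lincomb (polar c Q A A) Q (- polar c Q Q A) A) (lincomb (polar c Q A A) Q (- polar c Q Q A) A)
           (lincomb (polar c Q A A) Q (- polar c Q Q A) A) = 0"
  using FQ FA by (simp add: polar_lincomb polar_sym algebra_simps power2_eq_square power3_eq_cube)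

text \<open>Let \<open>A\<close> be the third point of \<open>X\<close> on the tangent line through \<open>P\<close> and \<open>R\<close>, and \<open>B\<close> the
  third point on the line through \<open>Q\<close> and \<open>A\<close>.  When the line \<open>PQ\<close> lies on \<open>X\<close>,
  \<open>polar c P B B = 27 q\<^sup>3 b \<cdot> tangency_defect c P Q R\<close> with \<open>q = polar c P R R\<close> and
  \<open>b = polar c Q Q R\<close>; this decides whether the line \<open>PB\<close> is tangent at \<open>P\<close> with third point \<open>B\<close>.\<close>
definition tangency_defect :: "('n::finite) cubic \<Rightarrow> ('n \<Rightarrow> rat) \<Rightarrow> ('n \<Rightarrow> rat) \<Rightarrow> ('n \<Rightarrow> rat) \<Rightarrow> rat" where
  "tangency_defect c P Q R = 3 * (polar c P R R)^2 * polar c Q Q R + 4 * polar c R R R * (polar c P Q R)^2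
     - 6 * polar c P R R * polar c Q R R * polar c P Q R"

lemma qspan_via_tangent_point:
  fixes P Q R :: "'n::finite \<Rightarrow> rat"
  assumes P0: "P \<noteq> (\<lambda>_. 0)" and Q0: "Q \<noteq> (\<lambda>_. 0)"
    and FP: "polar c P P P = 0" and FQ: "polar c Q Q Q = 0" and PPQ: "polar c P P Q = 0" and PQQ: "polar c P Q Q = 0"
    and PPR: "polar c P P R = 0" and q0: "polar c P R R \<noteq> 0" and b0: "polar c Q Q R \<noteq> 0"
    and defect: "tangency_defect c P Q R \<noteq> 0"
  shows "Q \<in> qspan c P"
proof -
  define q where "q = polar c P R R"
  define A where "A = lincomb (- polar c R R R) P (3 * q) R"
  define B where "B = lincomb (polar c Q A A) Q (- polar c Q Q A) A"
  note A = tangent_line_third_point[OF FP PPR, folded q_def, folded A_def]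
  have QQA: "polar c Q Q A = 3 * q * polar c Q Q R" unfolding A_def using PQQ
    by (simp add: polar_lincomb polar_sym algebra_simps)
  have QAA: "polar c Q A A = (polar c R R R)^2 * polar c Q P P - 6 * polar c R R R * q * polar c P Q R
      + 9 * q^2 * polar c Q R R"
    unfolding A_def by (simp add: polar_lincomb polar_sym algebra_simps power2_eq_square)
  have PQA: "polar c P Q A = 3 * q * polar c P Q R" unfolding A_def using PPQ
    by (simp add: polar_lincomb polar_sym algebra_simps)
  have FB: "polar c B B B = 0" unfolding B_def using secant_line_third_point[OF FQ A(1)] .
  have PPB: "polar c P P B = 0" unfolding B_def using PPQ A(2) by (simp add: polar_lincomb)
  have "polar c P B B = (polar c Q Q A)^2 * polar c P A A - 2 * polar c Q A A * polar c Q Q A * polar c P Q A"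
    unfolding B_def using PQQ by (simp add: polar_lincomb polar_sym algebra_simps power2_eq_square)
  also have "\<dots> = 27 * q^3 * polar c Q Q R * tangency_defect c P Q R"
    unfolding QQA A(3) QAA PQA tangency_defect_def q_def using PPQ
    by (simp add: polar_sym algebra_simps power2_eq_square power3_eq_cube)
  finally have PBB: "polar c P B B \<noteq> 0" using q0 b0 defect unfolding q_def by simp
  have "polar c P A A \<noteq> 0" using A(3) q0 unfolding q_def by simp
  then have "A \<in> qspan c P" by (rule qspan_tangent_line[OF qspan_self P0 FP A(1,2)])
  moreover have "B \<in> qspan c P" by (rule qspan_tangent_line[OF qspan_self P0 FP FB PPB PBB])
  moreover have "polar c Q Q A \<noteq> 0" unfolding QQA using q0 b0 unfolding q_def by simp
  ultimately show ?thesis using qspan_secant_line[OF _ _ Q0 FQ A(1)] unfolding B_def by blast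
qed

section \<open>Points in general position in the tangent hyperplane\<close>

lemma smooth_cubic_gradient_nonzero:
  fixes x :: "'n::finite \<Rightarrow> rat"
  assumes "smooth_cubic c" "x \<noteq> (\<lambda>_. 0)"
  shows "\<exists>m. cpartial c m x \<noteq> 0"
proof (rule ccontr)
  assume "\<not> ?thesis"
  then have "\<forall>m. cpartial c m (of_rat_vec x :: 'n \<Rightarrow> complex) = 0" by (simp add: cpartial_of_rat_vec)
  then have "(of_rat_vec x :: 'n \<Rightarrow> complex) = (\<lambda>_. 0)" using assms(1) unfolding smooth_cubic_def by blast
  then show False using assms(2) unfolding of_rat_vec_def by (simp add: fun_eq_iff)
qed

lemma dot_gradient_hyperplane_proj:
  fixes P v :: "'n::finite \<Rightarrow> rat"
  assumes "dot (\<lambda>m. cpartial c m P) v \<noteq> 0"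
  shows "polar c P P (hyperplane_proj (\<lambda>m. cpartial c m P) v x) = 0"
  using dot_hyperplane_proj_self[of "\<lambda>m. cpartial c m P" v x] assms dot_gradient_polar[of c P] by simp

lemma exists_transversal_to_tangent:
  assumes "smooth_cubic c" "P \<noteq> (\<lambda>_. 0)"
  obtains v :: "'n::finite \<Rightarrow> rat" where "dot (\<lambda>m. cpartial c m P) v \<noteq> 0"
  using smooth_cubic_gradient_nonzero[OF assms] dot_unit_vec by metis

text \<open>Over \<open>\<complex>\<close>, some line through \<open>P\<close> in \<open>T\<^sub>P X\<close> is not contained in \<open>X\<close>; if the quadric
  \<open>polar c P R R\<close> vanished on the rational points of \<open>T\<^sub>P X\<close>, it would vanish on its complex points.\<close>
lemma non_eckardt_polar_nonzero:
  fixes c :: "('n::finite) cubic" and P :: "'n \<Rightarrow> rat"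
  assumes sm: "smooth_cubic c" and P0: "P \<noteq> (\<lambda>_. 0)" and FP: "polar c P P P = 0" and ne: "\<not> eckardt c P"
  shows "\<exists>R. polar c P P R = 0 \<and> polar c P R R \<noteq> 0"
proof (rule ccontr)
  assume nn: "\<not> ?thesis"
  define Pc :: "'n \<Rightarrow> complex" where "Pc = of_rat_vec P"
  define gP where "gP = (\<lambda>m. cpartial c m P)"
  obtain R :: "'n \<Rightarrow> complex" and s t where R: "cform c R = 0" "in_tangent c Pc R"
    and st: "\<not> (cform c (lincomb s Pc t R) = 0 \<and> in_tangent c Pc (lincomb s Pc t R))"
    using ne unfolding eckardt_def to_cplx_eq_of_rat_vec Pc_def lambda_eq_lincomb by blast
  have FPc: "polar c Pc Pc Pc = 0" unfolding Pc_def polar_of_rat_vec FP by simp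
  have RPP: "polar c R Pc Pc = 0" using R(2) unfolding in_tangent_iff_polar by (simp add: polar_sym)
  have "in_tangent c Pc (lincomb s Pc t R)" unfolding in_tangent_iff_polar polar_lincomb3 FPc
    using RPP by (simp add: polar_sym)
  then have "cform c (lincomb s Pc t R) \<noteq> 0" using st by blast
  then have PRR: "polar c Pc R R \<noteq> 0" unfolding cform_lincomb using FPc RPP R(1)
    unfolding cform_eq_polar by (auto simp: polar_sym)
  obtain v where v: "dot gP v \<noteq> 0" using exists_transversal_to_tangent[OF sm P0] unfolding gP_def by blast
  have "polar c Pc (hyperplane_proj gP v z) (hyperplane_proj gP v z) = 0" for z
  proof (rule poly_on_lines_zero_from_rat[where h="\<lambda>z. polar c Pc (hyperplane_proj gP v z) (hyperplane_proj gP v z)"])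
    show "poly_on_lines (\<lambda>z. polar c Pc (hyperplane_proj gP v z) (hyperplane_proj gP v z))"
      by (intro poly_on_lines_polar vpoly_on_lines_const vpoly_on_lines_hyperplane_proj_comp vpoly_on_lines_id)
    fix x :: "'n \<Rightarrow> rat"
    have "polar c P (hyperplane_proj gP v x) (hyperplane_proj gP v x) = 0"
      using nn dot_gradient_hyperplane_proj[OF v[unfolded gP_def]] unfolding gP_def by blast
    then show "polar c Pc (hyperplane_proj gP v (of_rat_vec x)) (hyperplane_proj gP v (of_rat_vec x)) = 0"
      unfolding Pc_def hyperplane_proj_of_rat_vec polar_of_rat_vec by simp
  qed
  moreover have "hyperplane_proj gP v R = R"
  proof (rule hyperplane_proj_id)
    have "dot (of_rat_vec gP) R = dot (\<lambda>m. cpartial c m Pc) R"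
      unfolding gP_def Pc_def of_rat_vec_def cpartial_of_rat_vec[symmetric] ..
    then show "dot (of_rat_vec gP) R = 0" unfolding dot_gradient RPP by simp
  qed
  ultimately show False using PRR by metis
qed

text \<open>Otherwise \<open>polar c Q Q\<close> would vanish on \<open>T\<^sub>P X\<close>, i.e. be proportional to the tangent form at \<open>P\<close>.\<close>
lemma distinct_tangent_polar_nonzero:
  fixes c :: "('n::finite) cubic" and P Q :: "'n \<Rightarrow> rat"
  assumes sm: "smooth_cubic c" and P0: "P \<noteq> (\<lambda>_. 0)" and Q0: "Q \<noteq> (\<lambda>_. 0)"
    and ne: "tangent_hyperplane c Q \<noteq> tangent_hyperplane c P"
  shows "\<exists>R. polar c P P R = 0 \<and> polar c Q Q R \<noteq> 0"
proof (rule ccontr)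
  assume nn: "\<not> ?thesis"
  define gP where "gP = (\<lambda>m. cpartial c m P)"
  obtain v where v: "dot gP v \<noteq> 0" using exists_transversal_to_tangent[OF sm P0] unfolding gP_def by blast
  have key: "polar c Q Q x = (dot gP x / dot gP v) * polar c Q Q v" for x
  proof -
    define y where "y = hyperplane_proj gP v x"
    have "polar c Q Q y = 0" using nn dot_gradient_hyperplane_proj[OF v[unfolded gP_def]] unfolding y_def gP_def by blast
    moreover have "y = lincomb 1 x (- (dot gP x / dot gP v)) v"
      unfolding y_def hyperplane_proj_def lincomb_def by simp
    ultimately show ?thesis by (simp add: polar_lincomb)
  qed
  obtain m1 where m1: "cpartial c m1 Q \<noteq> 0" using smooth_cubic_gradient_nonzero[OF sm Q0] by blast
  have Qv: "polar c Q Q v \<noteq> 0"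
  proof
    assume "polar c Q Q v = 0"
    then have "polar c Q Q (unit_vec m1) = 0" using key[of "unit_vec m1"] by simp
    then show False using m1 unfolding cpartial_eq_polar by (simp add: polar_sym)
  qed
  have "in_tangent c Q x \<longleftrightarrow> in_tangent c P x" for x
  proof -
    have "in_tangent c Q x \<longleftrightarrow> polar c Q Q x = 0" unfolding in_tangent_iff_polar ..
    also have "\<dots> \<longleftrightarrow> dot gP x = 0" using key[of x] Qv v by simp
    also have "\<dots> \<longleftrightarrow> in_tangent c P x" unfolding gP_def dot_gradient_polar in_tangent_iff_polar by simp
    finally show ?thesis .
  qed
  then show False using ne unfolding tangent_hyperplane_def by auto
qed

lemma sextic_coeffs_zero:
  fixes a1 a2 a3 a4 a5 a6 :: rat
  assumes "\<And>z. a1*z + a2*z^2 + a3*z^3 + a4*z^4 + a5*z^5 + a6*z^6 = 0"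
  shows "a1 = 0 \<and> a2 = 0 \<and> a3 = 0 \<and> a4 = 0 \<and> a5 = 0 \<and> a6 = 0"
proof -
  define p where "p = [:0, a1, a2, a3, a4, a5, a6:]"
  have "poly p z = a1*z + a2*z^2 + a3*z^3 + a4*z^4 + a5*z^5 + a6*z^6" for z
    unfolding p_def by (simp add: algebra_simps eval_nat_numeral)
  then have "p = 0" using assms poly_all_0_iff_0 by metis
  then show ?thesis unfolding p_def by simp
qed

lemma cform_tangency_defect:
  assumes FQ: "polar c Q Q Q = 0"
  shows "cform c (lincomb (2 * polar c P Q h) h (- polar c P h h) Q) = 2 * polar c P Q h * tangency_defect c P Q h"
  unfolding tangency_defect_def cform_lincomb FQ
  by (simp add: polar_sym algebra_simps power2_eq_square power3_eq_cube)

lemma cform_sextic_expansion: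
  assumes FQ: "polar c Q Q Q = 0"
  shows "cform c (lincomb (2 * z) (lincomb z R0 1 u) (- q0) Q) =
     z * (6 * q0^2 * polar c Q Q u) + z^2 * (6 * q0^2 * polar c Q Q R0 - 12 * q0 * polar c Q u u)
   + z^3 * (8 * polar c u u u - 24 * q0 * polar c Q R0 u) + z^4 * (24 * polar c R0 u u - 12 * q0 * polar c Q R0 R0)
   + z^5 * (24 * polar c R0 R0 u) + z^6 * (8 * polar c R0 R0 R0)"
  unfolding cform_eq_polar using FQ
  by (simp add: polar_lincomb polar_sym algebra_simps power2_eq_square power3_eq_cube eval_nat_numeral)

text \<open>With \<open>R0\<close> normalised as below, every \<open>x\<close> in \<open>T\<^sub>P X\<close> splits as \<open>y Q + z R0 + u\<close> with \<open>u\<close>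
  in this codimension-3 space.\<close>
definition tangent_residual :: "('n::finite) cubic \<Rightarrow> ('n \<Rightarrow> rat) \<Rightarrow> ('n \<Rightarrow> rat) \<Rightarrow> ('n \<Rightarrow> rat) \<Rightarrow> ('n \<Rightarrow> rat) \<Rightarrow> bool"
  where "tangent_residual c P Q R0 u \<longleftrightarrow> polar c P P u = 0 \<and> polar c P Q u = 0 \<and> polar c P u R0 = 0"

context
  fixes c :: "('n::finite) cubic" and P Q R0 :: "'n \<Rightarrow> rat"
  assumes FQ: "polar c Q Q Q = 0" and PPQ: "polar c P P Q = 0" and PQQ: "polar c P Q Q = 0"
    and R0a: "polar c P P R0 = 0" and R0b: "polar c P Q R0 = 1" and R0c: "polar c P R0 R0 = 0"
    and defect_zero: "\<And>R. polar c P P R = 0 \<Longrightarrow> tangency_defect c P Q R = 0"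
begin

abbreviation W :: "('n \<Rightarrow> rat) \<Rightarrow> bool" where "W \<equiv> tangent_residual c P Q R0"

lemma tangent_residual_lincomb: "W u \<Longrightarrow> W w \<Longrightarrow> W (lincomb a u b w)"
  unfolding tangent_residual_def by (simp add: polar_lincomb)

lemma tangent_residual_decomp:
  assumes "polar c P P x = 0"
  shows "W (lincomb 1 (lincomb 1 x (- polar c P R0 x) Q) (- polar c P Q x) R0)"
    and "x = lincomb (polar c P R0 x) Q 1 (lincomb (polar c P Q x) R0 1
               (lincomb 1 (lincomb 1 x (- polar c P R0 x) Q) (- polar c P Q x) R0))"
proof -
  show "W (lincomb 1 (lincomb 1 x (- polar c P R0 x) Q) (- polar c P Q x) R0)"
    using assms PPQ PQQ R0a R0b R0c unfolding tangent_residual_def by (simp add: polar_lincomb polar_sym)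
  show "x = lincomb (polar c P R0 x) Q 1 (lincomb (polar c P Q x) R0 1
      (lincomb 1 (lincomb 1 x (- polar c P R0 x) Q) (- polar c P Q x) R0))"
    unfolding lincomb_def by (simp add: fun_eq_iff)
qed

text \<open>On the line through \<open>z R0 + u\<close> and \<open>Q\<close>, \<open>cform c\<close> vanishes identically in \<open>z\<close> by
  \<open>cform_tangency_defect\<close>; these are its six coefficients.\<close>
lemma tangent_residual_identities:
  assumes u: "W u"
  shows "polar c P u u ^ 2 * polar c Q Q u = 0"
    and "6 * (polar c P u u)^2 * polar c Q Q R0 - 12 * polar c P u u * polar c Q u u = 0"
    and "8 * polar c u u u - 24 * polar c P u u * polar c Q R0 u = 0"
    and "24 * polar c R0 u u - 12 * polar c P u u * polar c Q R0 R0 = 0"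
    and "polar c R0 R0 u = 0" and "polar c R0 R0 R0 = 0"
proof -
  have zero: "cform c (lincomb (2 * z) (lincomb z R0 1 u) (- polar c P u u) Q) = 0" for z
  proof -
    define h where "h = lincomb z R0 1 u"
    have "polar c P Q h = z" "polar c P h h = polar c P u u" "polar c P P h = 0"
      unfolding h_def using u R0a R0b R0c unfolding tangent_residual_def by (simp_all add: polar_lincomb polar_sym)
    then show ?thesis using cform_tangency_defect[OF FQ, of P h] defect_zero unfolding h_def by simp
  qed
  have "(6 * (polar c P u u)^2 * polar c Q Q u) * z + (6 * (polar c P u u)^2 * polar c Q Q R0 - 12 * polar c P u u * polar c Q u u) * z^2
      + (8 * polar c u u u - 24 * polar c P u u * polar c Q R0 u) * z^3 + (24 * polar c R0 u u - 12 * polar c P u u * polar c Q R0 R0) * z^4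
      + (24 * polar c R0 R0 u) * z^5 + (8 * polar c R0 R0 R0) * z^6 = 0" for z
    using zero[of z] unfolding cform_sextic_expansion[OF FQ] by (simp add: algebra_simps)
  from sextic_coeffs_zero[OF this]
  show "polar c P u u ^ 2 * polar c Q Q u = 0"
    and "6 * (polar c P u u)^2 * polar c Q Q R0 - 12 * polar c P u u * polar c Q u u = 0"
    and "8 * polar c u u u - 24 * polar c P u u * polar c Q R0 u = 0"
    and "24 * polar c R0 u u - 12 * polar c P u u * polar c Q R0 R0 = 0"
    and "polar c R0 R0 u = 0" and "polar c R0 R0 R0 = 0" by simp_all
qed

lemma tangent_residual_nonzero_both:
  assumes "poly_on_lines f" "poly_on_lines g" "W u" "f u \<noteq> 0" "W w" "g w \<noteq> 0"
  obtains x where "W x" "f x \<noteq> 0" "g x \<noteq> 0"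
  using poly_on_lines_common_nonzero[of f g W, OF assms(1,2) tangent_residual_lincomb assms(3-6)] by blast

lemma cform_tangent_quadric_case:
  assumes D1: "\<And>u. W u \<Longrightarrow> polar c Q Q u = 0"
    and D2: "\<And>u. W u \<Longrightarrow> polar c Q u u = polar c P u u * polar c Q Q R0 / 2"
    and x: "polar c P P x = 0"
    and mu: "3 * polar c Q R0 x - 3/2 * polar c Q Q R0 * polar c P R0 x - 3/2 * polar c Q R0 R0 * polar c P Q x = 0"
  shows "cform c x = 0"
proof -
  define y where "y = polar c P R0 x"
  define z where "z = polar c P Q x"
  define u where "u = lincomb 1 (lincomb 1 x (- y) Q) (- z) R0"
  define w where "w = lincomb z R0 1 u"
  note uW = tangent_residual_decomp(1)[OF x, folded y_def z_def, folded u_def]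
  have xd: "x = lincomb y Q 1 w" using tangent_residual_decomp(2)[OF x] unfolding w_def u_def y_def z_def .
  define q0 where "q0 = polar c P u u"
  define \<tau> where "\<tau> = polar c Q R0 u"
  note I = tangent_residual_identities[OF uW]
  have e1: "polar c Q Q w = z * polar c Q Q R0" unfolding w_def polar_lincomb3 D1[OF uW] by simp
  have "polar c Q w w = z * (z * polar c Q R0 R0 + polar c Q R0 u) + (z * polar c Q R0 u + polar c Q u u)"
    unfolding w_def polar_lincomb2 polar_lincomb3 by (simp add: polar_sym23[of c Q u R0])
  then have e2: "polar c Q w w = z^2 * polar c Q R0 R0 + 2 * z * \<tau> + q0 * polar c Q Q R0 / 2"
    unfolding D2[OF uW] \<tau>_def q0_def by (simp add: algebra_simps power2_eq_square)
  have "polar c w w w = z^3 * polar c R0 R0 R0 + 3 * z^2 * 1 * polar c R0 R0 u + 3 * z * 1^2 * polar c R0 u u + 1^3 * polar c u u u"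
    unfolding w_def cform_lincomb[unfolded cform_eq_polar] ..
  then have e3: "polar c w w w = 3 * z * (q0 * polar c Q R0 R0 / 2) + 3 * q0 * \<tau>"
    using I(3-6) unfolding q0_def \<tau>_def by (simp add: algebra_simps)
  have "polar c Q R0 x = y * polar c Q Q R0 + z * polar c Q R0 R0 + \<tau>"
    unfolding xd w_def polar_lincomb3 \<tau>_def by (simp add: polar_sym)
  moreover have "polar c P R0 x = y" "polar c P Q x = z"
    unfolding y_def z_def by simp_all
  ultimately have mu': "3 * \<tau> + 3/2 * (y * polar c Q Q R0 + z * polar c Q R0 R0) = 0"
    using mu by (simp add: algebra_simps)
  have "cform c (lincomb y Q 1 w) = (q0 + 2 * y * z) * (3 * \<tau> + 3/2 * (y * polar c Q Q R0 + z * polar c Q R0 R0))"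
    unfolding cform_lincomb e1 e2 e3 using FQ by (simp add: field_simps power2_eq_square power3_eq_cube)
  then show ?thesis using xd mu' by simp
qed

lemma defect_vanishing_quadric_case:
  assumes card: "CARD('n) \<ge> 5" and sm: "smooth_cubic c" and FP: "polar c P P P = 0"
    and v: "dot (\<lambda>m. cpartial c m P) v \<noteq> 0" and u0: "W u0" "polar c P u0 u0 \<noteq> 0"
  shows False
proof -
  have poly_P: "poly_on_lines (\<lambda>x. polar c P x x)"
    by (intro poly_on_lines_polar vpoly_on_lines_const vpoly_on_lines_id)
  have D1: "polar c Q Q u = 0" if u: "W u" for u
  proof (rule ccontr)
    assume "polar c Q Q u \<noteq> 0"
    moreover have "poly_on_lines (\<lambda>x. polar c Q Q x)"
      by (intro poly_on_lines_polar vpoly_on_lines_const vpoly_on_lines_id)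
    ultimately obtain w where "W w" "polar c P w w \<noteq> 0" "polar c Q Q w \<noteq> 0"
      using tangent_residual_nonzero_both[OF poly_P _ u0 u] by blast
    then show False using tangent_residual_identities(1)[of w] by simp
  qed
  have D2: "polar c Q u u = polar c P u u * polar c Q Q R0 / 2" if u: "W u" for u
  proof (rule ccontr)
    assume "polar c Q u u \<noteq> polar c P u u * polar c Q Q R0 / 2"
    then have "2 * polar c Q u u - polar c P u u * polar c Q Q R0 \<noteq> 0" by (simp add: field_simps)
    moreover have "poly_on_lines (\<lambda>x. 2 * polar c Q x x - polar c P x x * polar c Q Q R0)"
      by (intro poly_on_lines_diff poly_on_lines_mult poly_on_lines_const poly_on_lines_polar vpoly_on_lines_const vpoly_on_lines_id)
    ultimately obtain w where w: "W w" "polar c P w w \<noteq> 0" "2 * polar c Q w w - polar c P w w * polar c Q Q R0 \<noteq> 0"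
      using tangent_residual_nonzero_both[OF poly_P _ u0 u] by blast
    have "- 6 * polar c P w w * (2 * polar c Q w w - polar c P w w * polar c Q Q R0) = 0"
      using tangent_residual_identities(2)[OF w(1)] by (simp add: algebra_simps power2_eq_square)
    then show False using w(2,3) by simp
  qed
  define mu where "mu = (\<lambda>i. 3 * polar c Q R0 (unit_vec i) - 3/2 * polar c Q Q R0 * polar c P R0 (unit_vec i)
      - 3/2 * polar c Q R0 R0 * polar c P Q (unit_vec i))"
  have dmu: "dot mu x = 3 * polar c Q R0 x - 3/2 * polar c Q Q R0 * polar c P R0 x - 3/2 * polar c Q R0 R0 * polar c P Q x" for x
    unfolding mu_def polar_eq_dot[of c Q R0 x] polar_eq_dot[of c P R0 x] polar_eq_dot[of c P Q x] dot_def
    by (simp add: sum_subtractf sum_distrib_left sum.distrib sum_divide_distrib algebra_simps)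
  have "cform c x = 0" if "dot (\<lambda>m. cpartial c m P) x = 0" "dot mu x = 0" for x
    using cform_tangent_quadric_case[OF D1 D2] that unfolding dot_gradient_polar dmu by simp
  moreover have "dot mu P = 3" unfolding dmu using R0b R0a PPQ by (simp add: polar_sym)
  moreover have "dot (\<lambda>m. cpartial c m P) P = 0" unfolding dot_gradient_polar using FP by simp
  ultimately show False using smooth_cubic_no_codim2_subspace[OF card sm v, of mu P] by simp
qed

lemma defect_vanishing_cone_case:
  assumes card: "CARD('n) \<ge> 5" and sm: "smooth_cubic c"
    and v: "dot (\<lambda>m. cpartial c m P) v \<noteq> 0" and cone: "\<And>u. W u \<Longrightarrow> polar c P u u = 0"
  shows False
proof -
  define mu where "mu = (\<lambda>i. polar c P R0 (unit_vec i))"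
  have dmu: "dot mu x = polar c P R0 x" for x unfolding mu_def polar_eq_dot[of c P R0 x] ..
  have "cform c x = 0" if x: "dot (\<lambda>m. cpartial c m P) x = 0" "dot mu x = 0" for x
  proof -
    have "polar c P P x = 0" using x(1) unfolding dot_gradient_polar by simp
    note u = tangent_residual_decomp[OF this]
    have "polar c P R0 x = 0" using x(2) dmu by simp
    then have xd: "x = lincomb (polar c P Q x) R0 1 (lincomb 1 (lincomb 1 x 0 Q) (- polar c P Q x) R0)"
      using u(2) by (simp add: lincomb_def)
    have W0: "W (\<lambda>_. 0)" unfolding tangent_residual_def by simp
    note I = tangent_residual_identities[OF u(1)] tangent_residual_identities(6)[OF W0]
    show ?thesis using I cone[OF u(1)] \<open>polar c P R0 x = 0\<close>
      by (subst xd, unfold cform_lincomb) (simp add: polar_sym)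
  qed
  moreover have "dot mu Q = 1" unfolding dmu using R0b by (simp add: polar_sym)
  moreover have "dot (\<lambda>m. cpartial c m P) Q = 0" unfolding dot_gradient_polar using PPQ by simp
  ultimately show False using smooth_cubic_no_codim2_subspace[OF card sm v, of mu Q] by simp
qed

end

lemma tangent_common_nonzero:
  assumes "poly_on_lines f" "poly_on_lines g"
    and "polar c P P u = 0" "f u \<noteq> 0" "polar c P P w = 0" "g w \<noteq> 0"
  obtains R where "polar c P P R = 0" "f R \<noteq> 0" "g R \<noteq> 0"
  using poly_on_lines_common_nonzero[of f g "\<lambda>x. polar c P P x = 0", OF assms(1,2) _ assms(3-6)]
  by (auto simp: polar_lincomb3)

lemma poly_on_lines_tangency_defect: "poly_on_lines (\<lambda>x. tangency_defect c P Q x)"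
  unfolding tangency_defect_def power2_eq_square
  by (intro poly_on_lines_diff poly_on_lines_add poly_on_lines_mult poly_on_lines_const poly_on_lines_polar
      vpoly_on_lines_const vpoly_on_lines_id)

text \<open>If the defect vanished on \<open>T\<^sub>P X\<close>, either it reduces to \<open>3 q\<^sup>2 b\<close>, which does not vanish, or
  after normalising a point \<open>R0\<close> with \<open>polar c P Q R0 = 1\<close> the cubic contains a
  codimension-2 linear space, contradicting smoothness.\<close>
lemma exists_tangency_defect_nonzero:
  fixes c :: "('n::finite) cubic" and P Q R1 R2 :: "'n \<Rightarrow> rat"
  assumes card: "CARD('n) \<ge> 5" and sm: "smooth_cubic c" and P0: "P \<noteq> (\<lambda>_. 0)"
    and FP: "polar c P P P = 0" and FQ: "polar c Q Q Q = 0" and PPQ: "polar c P P Q = 0" and PQQ: "polar c P Q Q = 0"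
    and R1: "polar c P P R1 = 0" "polar c P R1 R1 \<noteq> 0" and R2: "polar c P P R2 = 0" "polar c Q Q R2 \<noteq> 0"
  shows "\<exists>R. polar c P P R = 0 \<and> tangency_defect c P Q R \<noteq> 0"
proof (rule ccontr)
  assume "\<not> ?thesis"
  then have defect_zero: "tangency_defect c P Q R = 0" if "polar c P P R = 0" for R using that by blast
  show False
  proof (cases "\<forall>R. polar c P P R = 0 \<longrightarrow> polar c P Q R = 0")
    case True
    have "poly_on_lines (\<lambda>x. polar c P x x)" "poly_on_lines (\<lambda>x. polar c Q Q x)"
      by (intro poly_on_lines_polar vpoly_on_lines_const vpoly_on_lines_id)+
    from tangent_common_nonzero[OF this R1 R2]
    obtain R where R: "polar c P P R = 0" "polar c P R R \<noteq> 0" "polar c Q Q R \<noteq> 0" .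
    then have "tangency_defect c P Q R = 3 * (polar c P R R)^2 * polar c Q Q R"
      using True unfolding tangency_defect_def by simp
    then show False using defect_zero[OF R(1)] R(2,3) by simp
  next
    case False
    then obtain R where R: "polar c P P R = 0" "polar c P Q R \<noteq> 0" by blast
    define R0 where "R0 = lincomb (1 / polar c P Q R) R (- (polar c P R R / (2 * (polar c P Q R)^2))) Q"
    have R0a: "polar c P P R0 = 0" unfolding R0_def polar_lincomb3 R(1) PPQ by simp
    have R0b: "polar c P Q R0 = 1" unfolding R0_def polar_lincomb3 PQQ using R(2) by simp
    have R0c: "polar c P R0 R0 = 0" unfolding R0_def polar_lincomb2 polar_lincomb3 PQQ
      using R(2) by (simp add: polar_sym field_simps power2_eq_square)
    obtain v where v: "dot (\<lambda>m. cpartial c m P) v \<noteq> 0" using exists_transversal_to_tangent[OF sm P0] .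
    show False
    proof (cases "\<exists>u0. tangent_residual c P Q R0 u0 \<and> polar c P u0 u0 \<noteq> 0")
      case True
      then obtain u0 where "tangent_residual c P Q R0 u0" "polar c P u0 u0 \<noteq> 0" by blast
      from defect_vanishing_quadric_case[OF FQ PPQ PQQ R0a R0b R0c defect_zero card sm FP v this]
      show False .
    next
      case False
      then show False using defect_vanishing_cone_case[OF FQ PPQ PQQ R0a R0b R0c defect_zero card sm v] by blast
    qed
  qed
qed

lemma exists_generic_tangent_point:
  fixes c :: "('n::finite) cubic" and P Q :: "'n \<Rightarrow> rat"
  assumes card: "CARD('n) \<ge> 5" and sm: "smooth_cubic c" and P0: "P \<noteq> (\<lambda>_. 0)" and Q0: "Q \<noteq> (\<lambda>_. 0)"
    and FP: "polar c P P P = 0" and FQ: "polar c Q Q Q = 0" and PPQ: "polar c P P Q = 0" and PQQ: "polar c P Q Q = 0"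
    and ne: "\<not> eckardt c P" and ne_tangent: "tangent_hyperplane c Q \<noteq> tangent_hyperplane c P"
  obtains R where "polar c P P R = 0" "polar c P R R \<noteq> 0" "polar c Q Q R \<noteq> 0" "tangency_defect c P Q R \<noteq> 0"
proof -
  have poly_qb: "poly_on_lines (\<lambda>x. polar c P x x)" "poly_on_lines (\<lambda>x. polar c Q Q x)"
    "poly_on_lines (\<lambda>x. polar c P x x * polar c Q Q x)"
    by (intro poly_on_lines_mult poly_on_lines_polar vpoly_on_lines_const vpoly_on_lines_id)+
  obtain R1 where R1: "polar c P P R1 = 0" "polar c P R1 R1 \<noteq> 0"
    using non_eckardt_polar_nonzero[OF sm P0 FP ne] by blast
  obtain R2 where R2: "polar c P P R2 = 0" "polar c Q Q R2 \<noteq> 0"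
    using distinct_tangent_polar_nonzero[OF sm P0 Q0 ne_tangent] by blast
  obtain R3 where R3: "polar c P P R3 = 0" "tangency_defect c P Q R3 \<noteq> 0"
    using exists_tangency_defect_nonzero[OF card sm P0 FP FQ PPQ PQQ R1 R2] by blast
  obtain R12 where R12: "polar c P P R12 = 0" "polar c P R12 R12 * polar c Q Q R12 \<noteq> 0"
    using tangent_common_nonzero[OF poly_qb(1,2) R1 R2] by auto
  obtain R where "polar c P P R = 0" "polar c P R R * polar c Q Q R \<noteq> 0" "tangency_defect c P Q R \<noteq> 0"
    using tangent_common_nonzero[OF poly_qb(3) poly_on_lines_tangency_defect R12 R3] by blast
  then show ?thesis using that by simp
qed

theorem lemma5p4:
  fixes c :: "('n::finite) cubic" and n :: nat and P Q :: "'n \<Rightarrow> rat"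
  assumes "CARD('n) = n + 2" and "n \<ge> 3"
    and "smooth_cubic c"
    and "on_X c P" and "\<not> eckardt c P"
    and "on_X c Q" and "in_tangent c P Q"
    and "tangent_hyperplane c Q \<noteq> tangent_hyperplane c P"
  shows "Q \<in> qspan c P"
proof -
  have card: "CARD('n) \<ge> 5" using assms(1,2) by simp
  have P0: "P \<noteq> (\<lambda>_. 0)" and FP: "polar c P P P = 0" using assms(4) unfolding on_X_def cform_eq_polar by auto
  have Q0: "Q \<noteq> (\<lambda>_. 0)" and FQ: "polar c Q Q Q = 0" using assms(6) unfolding on_X_def cform_eq_polar by auto
  have PPQ: "polar c P P Q = 0" using assms(7) unfolding in_tangent_iff_polar .
  show ?thesis
  proof (cases "polar c P Q Q = 0")
    case False
    then show ?thesis by (rule qspan_tangent_line[OF qspan_self P0 FP FQ PPQ])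
  next
    case True
    obtain R where "polar c P P R = 0" "polar c P R R \<noteq> 0" "polar c Q Q R \<noteq> 0" "tangency_defect c P Q R \<noteq> 0"
      using exists_generic_tangent_point[OF card assms(3) P0 Q0 FP FQ PPQ True assms(5,8)] .
    then show ?thesis using qspan_via_tangent_point[OF P0 Q0 FP FQ PPQ True] by blast
  qed
qed

end
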